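(* Let $d\ge2$ and let $c:V_d\to\ell^\infty(V_d/V_{[0,1/d)})$ be defined by $c(v)=(v-1)\chi_X=\chi_{v\cdot X}-\chi_X$. Then (i) $c(v)\in\ell^2(V_d/V_{[0,1/d)})$ for every $v\in V_d$, and (ii) $c:V_d\to\ell^2(V_d/V_{[0,1/d)})$ is a proper 1-cocycle for the quasi-regular representation of $V_d$ on $\ell^2(V_d/V_{[0,1/d)})$. In particular $V_d$, and therefore also $F_d$ and $T_d$, have the Haagerup property.
   Context: $V_d$ is the Higman–Thompson group of bijections of $[0,1)$ that are piecewise affine on finitely many half-open intervals with endpoints in $\mathbb Z[1/d]$, with slopes powers of $d$; $T_d\le V_d$ consists of those inducing homeomorphisms of the circle $[0,1]/(0\sim1)$ and $F_d\le T_d$ of those inducing homeomorphisms of $[0,1]$. $V_{[0,1/d)}$ is the subgroup of elements acting as the identity on $[0,1/d)$. A standard $d$-adic interval has endpoints $a/d^k,(a+1)/d^k$ with integers $k\ge0$, $0\le a\le d^k-1$; a map $g$ on such an interval $I$ is standard affine if it is affine and $g(I)$ is a standard $d$-adic interval. $X=\{gV_{[0,1/d)}: g\text{ is standard affine on }[0,1/d)\}\subseteq V_d/V_{[0,1/d)}$, and $V_d$ acts on functions on $V_d/V_{[0,1/d)}$ by left translation. A 1-cocycle satisfies $c(v_1v_2)=v_1c(v_2)+c(v_1)$; it is proper if $\{v:\|c(v)\|_2\le r\}$ is finite for every $r$. *)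

theory Defs
  imports "HOL-Analysis.Analysis"
begin

definition dadic :: "nat \<Rightarrow> real \<Rightarrow> bool" where
  "dadic d x \<longleftrightarrow> (\<exists>(a::int) (k::nat). x = real_of_int a / real d ^ k)"

text \<open>Higman--Thompson group \<open>V_d\<close>: bijections of [0,1), extended by the identity
  outside [0,1) (so that each element is a unique function real => real), which are
  piecewise affine on finitely many half-open intervals [p_i, p_(i+1)) with
  d-adic breakpoints, slopes integer powers of d, and d-adic translation parts
  (equivalently: d-adic images of breakpoints).\<close>
definition Vd :: "nat \<Rightarrow> (real \<Rightarrow> real) set" where
  "Vd d = {f. bij_betw f {0..<1} {0..<1} \<and> (\<forall>x. x \<notin> {0..<1} \<longrightarrow> f x = x) \<and>
     (\<exists>ps :: real list. length ps \<ge> 2 \<and> sorted_wrt (<) ps \<and> hd ps = 0 \<and> last ps = 1 \<and>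
        (\<forall>p \<in> set ps. dadic d p) \<and>
        (\<forall>i < length ps - 1. \<exists>(k::int) b. dadic d b \<and>
            (\<forall>x \<in> {ps ! i ..< ps ! (i+1)}. f x = real d powi k * x + b)))}"

definition Td :: "nat \<Rightarrow> (real \<Rightarrow> real) set" where
  "Td d = {f \<in> Vd d. \<exists>h h'. homeomorphism (sphere (0::complex) 1) (sphere 0 1) h h' \<and>
      (\<forall>x \<in> {0..<1}. h (cis (2 * pi * x)) = cis (2 * pi * f x))}"

definition Fd :: "nat \<Rightarrow> (real \<Rightarrow> real) set" where
  "Fd d = {f \<in> Vd d. \<exists>h h'. homeomorphism {0..1::real} {0..1} h h' \<and>
      (\<forall>x \<in> {0..<1}. h x = f x)}"

definition Vsub :: "nat \<Rightarrow> (real \<Rightarrow> real) set" where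
  "Vsub d = {f \<in> Vd d. \<forall>x \<in> {0..<1/real d}. f x = x}"

definition coset :: "nat \<Rightarrow> (real \<Rightarrow> real) \<Rightarrow> (real \<Rightarrow> real) set" where
  "coset d g = (\<lambda>h. g \<circ> h) ` Vsub d"

definition Quot :: "nat \<Rightarrow> (real \<Rightarrow> real) set set" where
  "Quot d = coset d ` Vd d"

definition act :: "(real \<Rightarrow> real) \<Rightarrow> (real \<Rightarrow> real) set \<Rightarrow> (real \<Rightarrow> real) set" where
  "act v C = (\<lambda>g. v \<circ> g) ` C"

definition qreg :: "(real \<Rightarrow> real) \<Rightarrow> ((real \<Rightarrow> real) set \<Rightarrow> real) \<Rightarrow> ((real \<Rightarrow> real) set \<Rightarrow> real)" where
  "qreg v \<phi> = (\<lambda>C. \<phi> (act (inv v) C))"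

definition std_interval :: "nat \<Rightarrow> real set \<Rightarrow> bool" where
  "std_interval d J \<longleftrightarrow> (\<exists>(k::nat) (a::int). 0 \<le> a \<and> a \<le> int d ^ k - 1 \<and>
      J = {real_of_int a / real d ^ k ..< (real_of_int a + 1) / real d ^ k})"

definition std_affine :: "nat \<Rightarrow> (real \<Rightarrow> real) \<Rightarrow> real set \<Rightarrow> bool" where
  "std_affine d g I \<longleftrightarrow> (\<exists>m b. \<forall>x \<in> I. g x = m * x + b) \<and> std_interval d (g ` I)"

definition Xset :: "nat \<Rightarrow> (real \<Rightarrow> real) set set" where
  "Xset d = {coset d g | g. g \<in> Vd d \<and> std_affine d g {0..<1/real d}}"

definition cocyc :: "nat \<Rightarrow> (real \<Rightarrow> real) \<Rightarrow> (real \<Rightarrow> real) set \<Rightarrow> real" where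
  "cocyc d v = (\<lambda>C. indicator (act v ` Xset d) C - indicator (Xset d) C)"

definition in_l2 :: "nat \<Rightarrow> ((real \<Rightarrow> real) set \<Rightarrow> real) \<Rightarrow> bool" where
  "in_l2 d \<phi> \<longleftrightarrow> (\<forall>C. C \<notin> Quot d \<longrightarrow> \<phi> C = 0) \<and> (\<lambda>C. (\<phi> C)\<^sup>2) summable_on Quot d"

definition l2norm :: "nat \<Rightarrow> ((real \<Rightarrow> real) set \<Rightarrow> real) \<Rightarrow> real" where
  "l2norm d \<phi> = sqrt (infsum (\<lambda>C. (\<phi> C)\<^sup>2) (Quot d))"

end

theory Submission
  imports Defs
begin

text \<open>The cosets in \<open>X\<close> correspond bijectively to the standard intervals \<open>J\<close> of level at
  least 1, through elements \<open>g\<^sub>J\<close> of \<open>V_d\<close> mapping \<open>[0,1/d)\<close> affinely onto \<open>J\<close>.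
  For \<open>v \<in> V_d\<close> the coset \<open>v g\<^sub>J V_[0,1/d)\<close> lies in \<open>X\<close> exactly when \<open>v\<close> is standard
  affine on \<open>J\<close>, so \<open>vX - X\<close> and \<open>X - vX\<close> are in bijection with the standard intervals
  on which \<open>v\<close>, respectively \<open>v\<^sup>-\<^sup>1\<close>, is not standard affine. An element of \<open>V_d\<close> is
  standard affine on all sufficiently small standard intervals, so both sets are finite and
  \<open>\<parallel>c(v)\<parallel>\<^sup>2\<close> is their total size; the cocycle identity is formal.
  If fewer than \<open>m\<close> intervals are bad for \<open>v\<close> and for \<open>v\<^sup>-\<^sup>1\<close>, no interval of level
  \<open>m\<close> is bad (its \<open>m\<close> ancestors would all be bad), and then \<open>v\<close> maps the level-\<open>m\<close>
  intervals onto standard intervals of level at most \<open>2m\<close>; only finitely many \<open>v\<close> do so,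
  which gives properness.\<close>

section \<open>Standard intervals\<close>

definition std_ivl :: "nat \<Rightarrow> nat \<Rightarrow> int \<Rightarrow> real set" where
  "std_ivl d n a = {real_of_int a / real d ^ n ..< (real_of_int a + 1) / real d ^ n}"

definition std_index :: "nat \<Rightarrow> nat \<Rightarrow> int \<Rightarrow> bool" where
  "std_index d n a \<longleftrightarrow> 0 \<le> a \<and> a < int d ^ n"

lemma std_interval_iff: "std_interval d J \<longleftrightarrow> (\<exists>n a. std_index d n a \<and> J = std_ivl d n a)"
  unfolding std_interval_def std_index_def std_ivl_def by force

lemma std_ivl_1_0: "std_ivl d 1 0 = {0..<1 / real d}"
  unfolding std_ivl_def by simp

lemma divide_power_less_iff:
  assumes "d > 0" "k \<le> n"
  shows "real_of_int p / real d ^ n < real_of_int q / real d ^ k \<longleftrightarrow> p < q * int d ^ (n - k)"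
proof -
  have split: "real d ^ n = real d ^ k * real d ^ (n - k)"
    using assms by (simp flip: power_add)
  have "real_of_int p / real d ^ n < real_of_int q / real d ^ k
      \<longleftrightarrow> real_of_int p < real_of_int q * real d ^ (n - k)"
    using assms unfolding split by (simp add: field_simps)
  also have "\<dots> \<longleftrightarrow> p < q * int d ^ (n - k)"
    using of_int_less_iff[of p "q * int d ^ (n - k)", where 'a=real] by simp
  finally show ?thesis .
qed

lemma divide_power_le_iff:
  assumes "d > 0" "k \<le> n"
  shows "real_of_int p / real d ^ n \<le> real_of_int q / real d ^ k \<longleftrightarrow> p \<le> q * int d ^ (n - k)"
proof -
  have split: "real d ^ n = real d ^ k * real d ^ (n - k)"
    using assms by (simp flip: power_add)
  have "real_of_int p / real d ^ n \<le> real_of_int q / real d ^ k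
      \<longleftrightarrow> real_of_int p \<le> real_of_int q * real d ^ (n - k)"
    using assms unfolding split by (simp add: field_simps)
  also have "\<dots> \<longleftrightarrow> p \<le> q * int d ^ (n - k)"
    using of_int_le_iff[of p "q * int d ^ (n - k)", where 'a=real] by simp
  finally show ?thesis .
qed

lemma std_ivl_nested:
  assumes "d > 0" "m \<le> n" "y \<in> std_ivl d n b" "y \<in> std_ivl d m c"
  shows "std_ivl d n b \<subseteq> std_ivl d m c"
proof -
  from assms have "real_of_int b / real d ^ n < real_of_int (c + 1) / real d ^ m"
    unfolding std_ivl_def by auto
  then have "b < (c + 1) * int d ^ (n - m)"
    using divide_power_less_iff[OF assms(1,2)] by blast
  then have "b + 1 \<le> (c + 1) * int d ^ (n - m)"
    by simp
  then have upper: "real_of_int (b + 1) / real d ^ n \<le> real_of_int (c + 1) / real d ^ m"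
    using divide_power_le_iff[OF assms(1,2)] by blast
  from assms have "\<not> real_of_int (b + 1) / real d ^ n \<le> real_of_int c / real d ^ m"
    unfolding std_ivl_def by auto
  then have "\<not> b + 1 \<le> c * int d ^ (n - m)"
    using divide_power_le_iff[OF assms(1,2)] by blast
  then have "c * int d ^ (n - m) \<le> b"
    by simp
  then have lower: "real_of_int c / real d ^ m \<le> real_of_int b / real d ^ n"
    using divide_power_less_iff[OF assms(1,2), of b c] by (simp add: not_less)
  show ?thesis
    using upper lower unfolding std_ivl_def by auto
qed

lemma std_ivl_disjoint:
  assumes "d > 0" "a \<noteq> b"
  shows "std_ivl d n a \<inter> std_ivl d n b = {}"
proof (rule ccontr)
  assume "std_ivl d n a \<inter> std_ivl d n b \<noteq> {}"
  then have "std_ivl d n a = std_ivl d n b"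
    using std_ivl_nested[OF assms(1) order_refl] by blast
  then have "real_of_int a / real d ^ n = real_of_int b / real d ^ n"
    using atLeastLessThan_inj(1)[of "real_of_int a / real d ^ n" "(real_of_int a + 1) / real d ^ n"]
      assms(1) unfolding std_ivl_def by (simp add: divide_strict_right_mono)
  with assms show False by simp
qed

lemma std_ivl_inj:
  assumes "d \<ge> 2" "std_ivl d n a = std_ivl d m b"
  shows "n = m \<and> a = b"
proof -
  have pos: "real d ^ n > 0" "real d ^ m > 0"
    using assms by auto
  then have "real_of_int a / real d ^ n < (real_of_int a + 1) / real d ^ n"
    "real_of_int b / real d ^ m < (real_of_int b + 1) / real d ^ m"
    by (auto simp: divide_strict_right_mono)
  from atLeastLessThan_inj[OF assms(2)[unfolded std_ivl_def] this]
  have left: "real_of_int a / real d ^ n = real_of_int b / real d ^ m"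
    and right: "(real_of_int a + 1) / real d ^ n = (real_of_int b + 1) / real d ^ m"
    by auto
  then have "real d ^ n = real d ^ m"
    by (simp add: add_divide_distrib)
  then have "n = m"
    using assms(1) by (simp add: power_inject_exp)
  with left pos assms(1) show ?thesis
    by simp
qed

lemma left_endpoint_in_std_ivl: "d > 0 \<Longrightarrow> real_of_int a / real d ^ n \<in> std_ivl d n a"
  unfolding std_ivl_def by (auto simp: divide_strict_right_mono)

lemma floor_std_ivl:
  assumes "d > 0" "0 \<le> x" "x < 1"
  shows "x \<in> std_ivl d n \<lfloor>x * real d ^ n\<rfloor>" "std_index d n \<lfloor>x * real d ^ n\<rfloor>"
proof -
  have pos: "real d ^ n > 0"
    using assms by auto
  show "x \<in> std_ivl d n \<lfloor>x * real d ^ n\<rfloor>"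
    unfolding std_ivl_def using pos
    by (simp add: divide_le_eq less_divide_eq)
  have "x * real d ^ n < real d ^ n"
    using assms pos by simp
  then have "\<lfloor>x * real d ^ n\<rfloor> < real d ^ n"
    by linarith
  then show "std_index d n \<lfloor>x * real d ^ n\<rfloor>"
    unfolding std_index_def using assms pos
      of_int_less_iff[of "\<lfloor>x * real d ^ n\<rfloor>" "int d ^ n", where 'a=real] by simp
qed

lemma std_index_iff_subset:
  assumes "d > 0"
  shows "std_index d n a \<longleftrightarrow> std_ivl d n a \<subseteq> {0..<1}"
proof
  have pos: "real d ^ n > 0"
    using assms by auto
  show "std_ivl d n a \<subseteq> {0..<1}" if "std_index d n a"
  proof -
    have "a + 1 \<le> int d ^ n"
      using that unfolding std_index_def by simp
    then have "real_of_int a + 1 \<le> real d ^ n"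
      using of_int_le_iff[of "a + 1" "int d ^ n", where 'a=real] by simp
    moreover have "real_of_int a \<ge> 0"
      using that unfolding std_index_def by simp
    ultimately show ?thesis
      using pos unfolding std_ivl_def by (auto simp: divide_le_eq less_divide_eq)
  qed
  show "std_index d n a" if "std_ivl d n a \<subseteq> {0..<1}"
  proof -
    have "real_of_int a / real d ^ n \<in> {0..<1}"
      using that left_endpoint_in_std_ivl[OF assms] by blast
    then have "0 \<le> real_of_int a" "real_of_int a < real d ^ n"
      using pos by (simp_all add: zero_le_divide_iff divide_less_eq)
    then show ?thesis
      unfolding std_index_def using of_int_less_iff[of a "int d ^ n", where 'a=real] by simp
  qed
qed

lemma std_ivl_ancestor:
  assumes "d > 0" "std_index d m c" "n \<le> m"
  obtains k where "std_index d n k" "std_ivl d m c \<subseteq> std_ivl d n k"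
proof -
  define x where "x = real_of_int c / real d ^ m"
  have x: "x \<in> std_ivl d m c"
    unfolding x_def using left_endpoint_in_std_ivl assms by blast
  then have "0 \<le> x" "x < 1"
    using assms std_index_iff_subset by auto
  note floor = floor_std_ivl[OF assms(1) this, of n]
  show ?thesis
    using that[OF floor(2) std_ivl_nested[OF assms(1,3) x floor(1)]] .
qed

section \<open>Standard maps between standard intervals\<close>

lemma image_affine_atLeastLessThan:
  fixes s :: real
  assumes "s > 0"
  shows "(\<lambda>x. c + (x - A) * s) ` {A..<B} = {c..<c + (B - A) * s}"
proof
  show "(\<lambda>x. c + (x - A) * s) ` {A..<B} \<subseteq> {c..<c + (B - A) * s}"
    using assms by (auto intro: mult_strict_right_mono)
  show "{c..<c + (B - A) * s} \<subseteq> (\<lambda>x. c + (x - A) * s) ` {A..<B}"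
  proof
    fix y assume y: "y \<in> {c..<c + (B - A) * s}"
    have "A + (y - c) / s \<in> {A..<B}"
      using y assms by (auto simp: field_simps)
    moreover have "y = c + (A + (y - c) / s - A) * s"
      using assms by simp
    ultimately show "y \<in> (\<lambda>x. c + (x - A) * s) ` {A..<B}"
      by blast
  qed
qed

text \<open>An affine map of a half-open interval onto a half-open interval is increasing, so it matches
  left endpoints and lengths.\<close>

lemma affine_onto_atLeastLessThan:
  fixes m b :: real
  assumes "h > 0" "H > 0" and onto: "(\<lambda>x. m * x + b) ` {A..<A + h} = {L..<L + H}"
  shows "m * A + b = L" "m * h = H"
proof -
  have "m > 0"
  proof (rule ccontr)
    assume "\<not> m > 0"
    then have below: "m * x + b \<le> m * A + b" if "A \<le> x" for x
      using that by (simp add: mult_left_mono_neg)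
    have "m * A + b \<in> {L..<L + H}"
      unfolding onto[symmetric] using assms(1) by auto
    then have "(m * A + b + (L + H)) / 2 \<in> (\<lambda>x. m * x + b) ` {A..<A + h}"
      unfolding onto by auto
    then obtain x where "A \<le> x" "m * x + b = (m * A + b + (L + H)) / 2"
      by auto
    then show False
      using below[of x] \<open>m * A + b \<in> {L..<L + H}\<close> by auto
  qed
  have "(\<lambda>x. m * x + b) ` {A..<A + h} = (\<lambda>x. (m * A + b) + (x - A) * m) ` {A..<A + h}"
    by (rule image_cong) (simp_all add: algebra_simps)
  also have "\<dots> = {m * A + b..<m * A + b + h * m}"
    using image_affine_atLeastLessThan[OF \<open>m > 0\<close>] by simp
  finally have "{m * A + b..<m * A + b + h * m} = {L..<L + H}"
    using onto by simp
  moreover have "m * A + b < m * A + b + h * m" "L < L + H"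
    using \<open>m > 0\<close> assms by auto
  ultimately have "m * A + b = L" "m * A + b + h * m = L + H"
    using atLeastLessThan_inj by blast+
  then show "m * A + b = L" "m * h = H"
    by (simp_all add: mult.commute)
qed

definition std_map :: "nat \<Rightarrow> (real \<Rightarrow> real) \<Rightarrow> nat \<Rightarrow> int \<Rightarrow> nat \<Rightarrow> int \<Rightarrow> bool" where
  "std_map d f n a n' a' \<longleftrightarrow> (\<forall>x\<in>std_ivl d n a.
     f x = real_of_int a' / real d ^ n' + (x - real_of_int a / real d ^ n) * (real d ^ n / real d ^ n'))"

lemma std_ivl_eq_atLeastLessThan:
  "std_ivl d n a = {real_of_int a / real d ^ n ..< real_of_int a / real d ^ n + 1 / real d ^ n}"
  unfolding std_ivl_def by (simp add: add_divide_distrib)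

lemma std_map_image:
  assumes "d > 0" "std_map d f n a n' a'"
  shows "f ` std_ivl d n a = std_ivl d n' a'"
proof -
  have "f ` std_ivl d n a = (\<lambda>x. real_of_int a' / real d ^ n'
      + (x - real_of_int a / real d ^ n) * (real d ^ n / real d ^ n')) ` std_ivl d n a"
    using assms(2) unfolding std_map_def by (auto simp: image_def)
  also have "\<dots> = std_ivl d n' a'"
    unfolding std_ivl_eq_atLeastLessThan using assms(1)
    by (subst image_affine_atLeastLessThan) auto
  finally show ?thesis .
qed

lemma std_map_std_affine:
  assumes "d > 0" "std_map d f n a n' a'" "std_index d n' a'"
  shows "std_affine d f (std_ivl d n a)"
  unfolding std_affine_def
proof
  define r where "r = real d ^ n / real d ^ n'"
  have "\<forall>x\<in>std_ivl d n a. f x = r * x + (real_of_int a' / real d ^ n' - real_of_int a / real d ^ n * r)"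
    using assms(2) unfolding std_map_def r_def[symmetric] by (simp add: algebra_simps)
  then show "\<exists>m b. \<forall>x\<in>std_ivl d n a. f x = m * x + b"
    by blast
  show "std_interval d (f ` std_ivl d n a)"
    unfolding std_interval_iff using std_map_image[OF assms(1,2)] assms(3) by blast
qed

lemma std_affine_imp_std_map:
  assumes "d > 0" "std_affine d f (std_ivl d n a)"
  obtains n' a' where "std_index d n' a'" "std_map d f n a n' a'"
proof -
  obtain m b where f: "\<And>x. x \<in> std_ivl d n a \<Longrightarrow> f x = m * x + b"
    using assms(2) unfolding std_affine_def by blast
  obtain n' a' where idx: "std_index d n' a'" and onto: "f ` std_ivl d n a = std_ivl d n' a'"
    using assms(2) unfolding std_affine_def std_interval_iff by blast
  have "(\<lambda>x. m * x + b) ` std_ivl d n a = std_ivl d n' a'"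
    using onto f by (auto simp: image_def)
  from affine_onto_atLeastLessThan[OF _ _ this[unfolded std_ivl_eq_atLeastLessThan]] assms(1)
  have endpoint: "m * (real_of_int a / real d ^ n) + b = real_of_int a' / real d ^ n'"
    and slope: "m * (1 / real d ^ n) = 1 / real d ^ n'"
    by simp_all
  have "std_map d f n a n' a'"
    unfolding std_map_def
  proof
    fix x assume "x \<in> std_ivl d n a"
    then have "f x = (m * (real_of_int a / real d ^ n) + b) + (x - real_of_int a / real d ^ n) * m"
      by (simp add: f algebra_simps)
    moreover have "m = real d ^ n / real d ^ n'"
      using slope assms(1) by (simp add: field_simps)
    ultimately show "f x = real_of_int a' / real d ^ n'
        + (x - real_of_int a / real d ^ n) * (real d ^ n / real d ^ n')"
      unfolding endpoint by simp
  qed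
  with idx show ?thesis
    using that by blast
qed

lemma std_map_refine:
  assumes "d > 0" "std_map d f n a n' a'" "std_ivl d (n + j) c \<subseteq> std_ivl d n a"
  shows "std_map d f (n + j) c (n' + j) (a' * int d ^ j + c - a * int d ^ j)"
  unfolding std_map_def
proof
  fix x assume "x \<in> std_ivl d (n + j) c"
  then have fx: "f x = real_of_int a' / real d ^ n' + (x - real_of_int a / real d ^ n) * (real d ^ n / real d ^ n')"
    using assms unfolding std_map_def by auto
  show "f x = real_of_int (a' * int d ^ j + c - a * int d ^ j) / real d ^ (n' + j) +
     (x - real_of_int c / real d ^ (n + j)) * (real d ^ (n + j) / real d ^ (n' + j))"
    unfolding fx using assms(1) by (simp add: power_add field_simps)
qed

lemma std_map_std_index:
  assumes "d > 0" "std_map d f n a n' a'" "std_index d n a" "f ` {0..<1} \<subseteq> {0..<1}"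
  shows "std_index d n' a'"
proof -
  have "std_ivl d n a \<subseteq> {0..<1}"
    using assms std_index_iff_subset by blast
  then have "std_ivl d n' a' \<subseteq> {0..<1}"
    using std_map_image[OF assms(1,2)] assms(4) by blast
  then show ?thesis
    using std_index_iff_subset[OF assms(1)] by blast
qed

lemma std_map_comp:
  assumes "d > 0" "std_map d g n a n' a'" "std_map d f n' a' n'' a''"
  shows "std_map d (f \<circ> g) n a n'' a''"
  unfolding std_map_def
proof
  fix x assume x: "x \<in> std_ivl d n a"
  have "g x \<in> std_ivl d n' a'"
    using std_map_image[OF assms(1,2)] x by blast
  then have "f (g x) = real_of_int a'' / real d ^ n''
      + (g x - real_of_int a' / real d ^ n') * (real d ^ n' / real d ^ n'')"
    using assms(3) unfolding std_map_def by auto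
  also have "g x - real_of_int a' / real d ^ n' = (x - real_of_int a / real d ^ n) * (real d ^ n / real d ^ n')"
    using assms(2) x unfolding std_map_def by auto
  finally show "(f \<circ> g) x = real_of_int a'' / real d ^ n''
      + (x - real_of_int a / real d ^ n) * (real d ^ n / real d ^ n'')"
    using assms(1) by simp
qed

lemma std_map_inv:
  assumes "d > 0" "std_map d f n a n' a'" "inj f"
  shows "std_map d (inv f) n' a' n a"
  unfolding std_map_def
proof
  fix z assume "z \<in> std_ivl d n' a'"
  then obtain w where w: "w \<in> std_ivl d n a" "z = f w"
    using std_map_image[OF assms(1,2)] by blast
  then have "z = real_of_int a' / real d ^ n' + (w - real_of_int a / real d ^ n) * (real d ^ n / real d ^ n')"
    using assms(2) unfolding std_map_def by auto
  then have "w = real_of_int a / real d ^ n + (z - real_of_int a' / real d ^ n') * (real d ^ n' / real d ^ n)"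
    using assms(1) by simp
  moreover have "inv f z = w"
    using w(2) assms(3) by simp
  ultimately show "inv f z = real_of_int a / real d ^ n + (z - real_of_int a' / real d ^ n') * (real d ^ n' / real d ^ n)"
    by simp
qed

lemma std_map_cong:
  "(\<And>x. x \<in> std_ivl d n a \<Longrightarrow> f x = g x) \<Longrightarrow> std_map d f n a n' a' \<longleftrightarrow> std_map d g n a n' a'"
  unfolding std_map_def by auto

section \<open>A characterisation of \<open>V_d\<close>\<close>

definition perm01 :: "(real \<Rightarrow> real) \<Rightarrow> bool" where
  "perm01 f \<longleftrightarrow> bij_betw f {0..<1} {0..<1} \<and> (\<forall>x. x \<notin> {0..<1} \<longrightarrow> f x = x)"

lemma Vd_perm01: "f \<in> Vd d \<Longrightarrow> perm01 f"
  unfolding Vd_def perm01_def by auto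

lemma perm01_image_subset: "perm01 f \<Longrightarrow> f ` {0..<1} \<subseteq> {0..<1}"
  unfolding perm01_def bij_betw_def by auto

lemma perm01_bij:
  assumes "perm01 f"
  shows "bij f"
proof -
  have "bij_betw f (- {0..<1}) (- {0..<1})"
    using assms bij_betw_cong[of "- {0..<1::real}" id f "- {0..<1}"] unfolding perm01_def by auto
  then have "bij_betw f ({0..<1} \<union> - {0..<1}) ({0..<1} \<union> - {0..<1})"
    using assms unfolding perm01_def by (intro bij_betw_combine) auto
  then show ?thesis
    by simp
qed

lemma perm01_id: "perm01 id"
  unfolding perm01_def by auto

lemma perm01_comp: "perm01 f \<Longrightarrow> perm01 g \<Longrightarrow> perm01 (f \<circ> g)"
  unfolding perm01_def by (auto intro: bij_betw_trans)

lemma perm01_inv: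
  assumes "perm01 f"
  shows "perm01 (inv f)"
proof -
  have bij: "bij f"
    using assms by (rule perm01_bij)
  have f01: "bij_betw f {0..<1} {0..<1}"
    using assms unfolding perm01_def by auto
  have "bij_betw (inv f) {0..<1} {0..<1}"
    using bij_betw_inv_into[OF f01] bij_betw_cong[of "{0..<1}" "inv_into {0..<1} f" "inv f"]
      f01 bij by (metis bij_betw_inv_into_right bij_inv_eq_iff)
  moreover have "inv f x = x" if "x \<notin> {0..<1}" for x
    using that assms bij unfolding perm01_def by (metis bij_inv_eq_iff)
  ultimately show ?thesis
    unfolding perm01_def by auto
qed

text \<open>Together with \<open>perm01\<close> this characterises \<open>V_d\<close> (\<open>Vd_iff\<close>); unlike the
  breakpoint description it is evidently closed under composition.\<close>

definition locally_std :: "nat \<Rightarrow> (real \<Rightarrow> real) \<Rightarrow> bool" where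
  "locally_std d f \<longleftrightarrow> (\<forall>N. \<forall>\<^sub>F n in sequentially. \<forall>a. std_index d n a \<longrightarrow>
     (\<exists>n' a'. N \<le> n' \<and> std_index d n' a' \<and> std_map d f n a n' a'))"

lemma dadic_eventually:
  assumes "d > 0" "dadic d p"
  shows "\<forall>\<^sub>F n in sequentially. \<exists>y::int. p = real_of_int y / real d ^ n"
proof -
  obtain a k where p: "p = real_of_int a / real d ^ k"
    using assms(2) unfolding dadic_def by blast
  have "p = real_of_int (a * int d ^ j) / real d ^ (k + j)" for j
    using assms(1) unfolding p by (simp add: power_add)
  then have "\<exists>y::int. p = real_of_int y / real d ^ n" if "k \<le> n" for n
    using that le_Suc_ex by blast
  then show ?thesis
    unfolding eventually_sequentially by blast
qed

lemma affine_piece_eventually_std_map: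
  assumes d: "d \<ge> 2" and "perm01 f" "dadic d b" and f: "\<forall>x\<in>P. f x = real d powi k * x + b"
  shows "\<forall>\<^sub>F n in sequentially. \<forall>a. std_index d n a \<and> std_ivl d n a \<subseteq> P \<longrightarrow>
     (\<exists>n' a'. N \<le> n' \<and> std_index d n' a' \<and> std_map d f n a n' a')"
proof -
  have d0: "d > 0"
    using d by simp
  obtain z e where b: "b = real_of_int z / real d ^ e"
    using assms(3) unfolding dadic_def by blast
  \<comment> \<open>beyond this level the target level \<open>n - k\<close> is at least \<open>N\<close> and fine enough to contain \<open>b\<close>\<close>
  show ?thesis
    unfolding eventually_sequentially
  proof (rule exI[of _ "N + e + nat \<bar>k\<bar>"], intro allI impI)
    fix n a assume n: "N + e + nat \<bar>k\<bar> \<le> n" and a: "std_index d n a \<and> std_ivl d n a \<subseteq> P"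
    define n' where "n' = nat (int n - k)"
    have n': "int n' = int n - k" "N \<le> n'" "e \<le> n'"
      using n by (auto simp: n'_def)
    then obtain j where j: "n' = j + e"
      using le_Suc_ex by (metis add.commute)
    have "k = int n - int n'"
      using n'(1) by simp
    then have slope: "real d powi k = real d ^ n / real d ^ n'"
      using d0 by (simp add: power_int_diff)
    define a' where "a' = a + z * int d ^ j"
    have "std_map d f n a n' a'"
      unfolding std_map_def
    proof
      fix x assume "x \<in> std_ivl d n a"
      then have "f x = real d ^ n / real d ^ n' * x + real_of_int z / real d ^ e"
        using a f slope b by auto
      moreover have "real_of_int a' / real d ^ n' = real_of_int a / real d ^ n' + real_of_int z / real d ^ e"
        using d0 unfolding a'_def j by (simp add: power_add add_divide_distrib)
      moreover have "(x - real_of_int a / real d ^ n) * (real d ^ n / real d ^ n')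
          = real d ^ n / real d ^ n' * x - real_of_int a / real d ^ n'"
        using d0 by (simp add: field_simps)
      ultimately show "f x = real_of_int a' / real d ^ n' + (x - real_of_int a / real d ^ n) * (real d ^ n / real d ^ n')"
        by linarith
    qed
    moreover have "std_index d n' a'"
      using std_map_std_index[OF d0 calculation] a perm01_image_subset[OF assms(2)] by blast
    ultimately show "\<exists>n' a'. N \<le> n' \<and> std_index d n' a' \<and> std_map d f n a n' a'"
      using n' by blast
  qed
qed

lemma locally_std_if_affine_pieces:
  assumes d: "d \<ge> 2" and "perm01 f"
    and pieces: "\<And>k. std_index d n0 k \<Longrightarrow>
      \<exists>(kk::int) b. dadic d b \<and> (\<forall>x\<in>std_ivl d n0 k. f x = real d powi kk * x + b)"
  shows "locally_std d f"
  unfolding locally_std_def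
proof
  fix N
  have d0: "d > 0"
    using d by simp
  have "\<forall>\<^sub>F n in sequentially. \<forall>k\<in>{0..<int d ^ n0}. \<forall>a. std_index d n a \<and> std_ivl d n a \<subseteq> std_ivl d n0 k \<longrightarrow>
     (\<exists>n' a'. N \<le> n' \<and> std_index d n' a' \<and> std_map d f n a n' a')"
  proof (rule eventually_ball_finite[OF finite_atLeastLessThan_int], rule ballI)
    fix k assume "k \<in> {0..<int d ^ n0}"
    then have "std_index d n0 k"
      unfolding std_index_def by simp
    then obtain kk b where "dadic d b" "\<forall>x\<in>std_ivl d n0 k. f x = real d powi kk * x + b"
      using pieces by blast
    then show "\<forall>\<^sub>F n in sequentially. \<forall>a. std_index d n a \<and> std_ivl d n a \<subseteq> std_ivl d n0 k \<longrightarrow>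
       (\<exists>n' a'. N \<le> n' \<and> std_index d n' a' \<and> std_map d f n a n' a')"
      using affine_piece_eventually_std_map[OF d assms(2)] by blast
  qed
  then show "\<forall>\<^sub>F n in sequentially. \<forall>a. std_index d n a \<longrightarrow>
     (\<exists>n' a'. N \<le> n' \<and> std_index d n' a' \<and> std_map d f n a n' a')"
    using eventually_ge_at_top[of n0]
  proof eventually_elim
    case (elim n)
    show ?case
    proof (intro allI impI)
      fix a assume "std_index d n a"
      then obtain k where "std_index d n0 k" "std_ivl d n a \<subseteq> std_ivl d n0 k"
        using std_ivl_ancestor[OF d0] elim(2) by blast
      then show "\<exists>n' a'. N \<le> n' \<and> std_index d n' a' \<and> std_map d f n a n' a'"
        using elim(1) \<open>std_index d n a\<close> unfolding std_index_def by auto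
    qed
  qed
qed

lemma sorted_breakpoints_piece:
  fixes ps :: "real list"
  assumes "length ps \<ge> 2" "sorted_wrt (<) ps" "hd ps = 0" "last ps = 1" "0 \<le> x" "x < 1"
  obtains i where "i < length ps - 1" "ps ! i \<le> x" "x < ps ! (i + 1)"
proof -
  have ne: "ps \<noteq> []"
    using assms by auto
  define Q where "Q = (\<lambda>j. j < length ps \<and> ps ! j \<le> x)"
  have Q0: "Q 0"
    using assms ne by (simp add: Q_def hd_conv_nth)
  have Q_bound: "\<And>j. Q j \<Longrightarrow> j \<le> length ps"
    by (simp add: Q_def)
  define i where "i = Greatest Q"
  have Qi: "Q i"
    using GreatestI_nat[of Q 0 "length ps", OF Q0 Q_bound] i_def by simp
  have "i \<noteq> length ps - 1"
    using Qi assms ne unfolding Q_def by (auto simp: last_conv_nth)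
  then have i: "i < length ps - 1"
    using Qi unfolding Q_def by auto
  have "\<not> Q (i + 1)"
    using Greatest_le_nat[of Q "i + 1" "length ps", OF _ Q_bound] i_def by fastforce
  then show ?thesis
    using that i Qi unfolding Q_def by auto
qed

lemma std_ivl_within_piece:
  fixes ps :: "real list"
  assumes "d > 0" "length ps \<ge> 2" "sorted_wrt (<) ps" "hd ps = 0" "last ps = 1"
    and level: "\<forall>p\<in>set ps. \<exists>y::int. p = real_of_int y / real d ^ n" and "std_index d n a"
  obtains i where "i < length ps - 1" "std_ivl d n a \<subseteq> {ps ! i ..< ps ! (i + 1)}"
proof -
  define x where "x = real_of_int a / real d ^ n"
  have "x \<in> std_ivl d n a"
    unfolding x_def using left_endpoint_in_std_ivl[OF assms(1)] .
  then have "0 \<le> x" "x < 1"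
    using assms std_index_iff_subset by auto
  then obtain i where i: "i < length ps - 1" "ps ! i \<le> x" "x < ps ! (i + 1)"
    using sorted_breakpoints_piece assms(2-5) by metis
  then obtain y where y: "ps ! (i + 1) = real_of_int y / real d ^ n"
    using level by force
  then have "a + 1 \<le> y"
    using i(3) assms(1) unfolding x_def by (simp add: divide_less_cancel)
  then have "(real_of_int a + 1) / real d ^ n \<le> ps ! (i + 1)"
    unfolding y using assms(1) by (simp add: divide_right_mono)
  then have "std_ivl d n a \<subseteq> {ps ! i ..< ps ! (i + 1)}"
    using i(2) unfolding std_ivl_def x_def by auto
  with i(1) show ?thesis
    using that by blast
qed

lemma Vd_imp_locally_std:
  assumes d: "d \<ge> 2" and f: "f \<in> Vd d"
  shows "locally_std d f"
proof -
  have d0: "d > 0"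
    using d by simp
  obtain ps :: "real list" where ps: "length ps \<ge> 2" "sorted_wrt (<) ps" "hd ps = 0" "last ps = 1"
    "\<forall>p \<in> set ps. dadic d p"
    "\<forall>i < length ps - 1. \<exists>(k::int) b. dadic d b \<and> (\<forall>x \<in> {ps ! i ..< ps ! (i + 1)}. f x = real d powi k * x + b)"
    using f unfolding Vd_def by blast
  have "\<forall>\<^sub>F n in sequentially. \<forall>p\<in>set ps. \<exists>y::int. p = real_of_int y / real d ^ n"
    using ps(5) by (intro eventually_ball_finite) (auto intro: dadic_eventually[OF d0])
  then obtain n0 where level: "\<forall>p\<in>set ps. \<exists>y::int. p = real_of_int y / real d ^ n0"
    unfolding eventually_sequentially by blast
  show ?thesis
  proof (rule locally_std_if_affine_pieces[OF d Vd_perm01[OF f]])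
    fix k assume "std_index d n0 k"
    then obtain i where i: "i < length ps - 1" "std_ivl d n0 k \<subseteq> {ps ! i ..< ps ! (i + 1)}"
      by (rule std_ivl_within_piece[OF d0 ps(1-4) level])
    then obtain kk b where "dadic d b" "\<forall>x \<in> {ps ! i ..< ps ! (i + 1)}. f x = real d powi kk * x + b"
      using ps(6) by blast
    with i(2) show "\<exists>(kk::int) b. dadic d b \<and> (\<forall>x\<in>std_ivl d n0 k. f x = real d powi kk * x + b)"
      using ps(6) by blast
  qed
qed

lemma std_map_affine_dadic:
  assumes "d > 0" "std_map d f n a n' a'"
  shows "\<exists>(k::int) b. dadic d b \<and> (\<forall>x\<in>std_ivl d n a. f x = real d powi k * x + b)"
proof (intro exI conjI ballI)
  show "dadic d (real_of_int (a' - a) / real d ^ n')"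
    unfolding dadic_def by blast
  fix x assume "x \<in> std_ivl d n a"
  then have "f x = real_of_int a' / real d ^ n' + (x - real_of_int a / real d ^ n) * (real d ^ n / real d ^ n')"
    using assms(2) unfolding std_map_def by blast
  moreover have "(x - real_of_int a / real d ^ n) * (real d ^ n / real d ^ n')
      = real d ^ n / real d ^ n' * x - real_of_int a / real d ^ n'"
    using assms(1) by (simp add: field_simps)
  moreover have "real d powi (int n - int n') = real d ^ n / real d ^ n'"
    using assms(1) by (simp add: power_int_diff)
  ultimately show "f x = real d powi (int n - int n') * x + real_of_int (a' - a) / real d ^ n'"
    by (simp add: diff_divide_distrib)
qed

lemma uniform_breakpoints:
  fixes d L :: nat
  assumes "d > 0"
  defines "ps \<equiv> map (\<lambda>i. real i / real d ^ L) [0..<d ^ L + 1]"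
  shows "length ps \<ge> 2" "sorted_wrt (<) ps" "hd ps = 0" "last ps = 1" "\<forall>p\<in>set ps. dadic d p"
    and "\<And>i. i < length ps - 1 \<Longrightarrow> std_index d L (int i) \<and> {ps ! i ..< ps ! (i + 1)} = std_ivl d L (int i)"
proof -
  have len: "length ps = d ^ L + 1"
    by (simp add: ps_def)
  have nth: "ps ! i = real i / real d ^ L" if "i < d ^ L + 1" for i
    using that by (simp add: ps_def del: upt_Suc)
  have pos: "real d ^ L > 0"
    using assms by simp
  show "length ps \<ge> 2"
    using len assms by simp
  show "sorted_wrt (<) ps"
    unfolding sorted_wrt_iff_nth_less len using nth pos by (auto simp: divide_strict_right_mono)
  show "hd ps = 0"
    by (simp add: ps_def hd_map del: upt_Suc)
  show "last ps = 1"
    using nth[of "d ^ L"] len pos by (simp add: last_conv_nth ps_def del: upt_Suc)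
  have "dadic d (real i / real d ^ L)" for i
    unfolding dadic_def by (metis of_int_of_nat_eq)
  then show "\<forall>p\<in>set ps. dadic d p"
    unfolding ps_def set_map by blast
  show "std_index d L (int i) \<and> {ps ! i ..< ps ! (i + 1)} = std_ivl d L (int i)"
    if "i < length ps - 1" for i
    using that len nth[of i] nth[of "i + 1"] unfolding std_ivl_def std_index_def
    by (simp add: add.commute flip: of_nat_less_iff)
qed

lemma locally_std_imp_Vd:
  assumes d: "d \<ge> 2" and "perm01 f" "locally_std d f"
  shows "f \<in> Vd d"
proof -
  have d0: "d > 0"
    using d by simp
  obtain L where L: "\<And>a. std_index d L a \<Longrightarrow> \<exists>n' a'. std_index d n' a' \<and> std_map d f L a n' a'"
    using assms(3) unfolding locally_std_def eventually_sequentially by (meson order_refl zero_le)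
  define ps where "ps = map (\<lambda>i. real i / real d ^ L) [0..<d ^ L + 1]"
  note ps = uniform_breakpoints[where L = L, OF d0, folded ps_def]
  have "\<exists>(k::int) b. dadic d b \<and> (\<forall>x \<in> {ps ! i ..< ps ! (i + 1)}. f x = real d powi k * x + b)"
    if "i < length ps - 1" for i
    using ps(6)[OF that] L std_map_affine_dadic[OF d0] by metis
  then show ?thesis
    using assms(2) ps(1-5) unfolding Vd_def perm01_def by blast
qed

lemma std_map_id: "d > 0 \<Longrightarrow> std_map d id n a n a"
  unfolding std_map_def by simp

lemma locally_std_id: "d > 0 \<Longrightarrow> locally_std d id"
  unfolding locally_std_def eventually_sequentially using std_map_id by blast

lemma locally_std_comp:
  assumes "d > 0" "locally_std d f" "locally_std d g"
  shows "locally_std d (f \<circ> g)"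
  unfolding locally_std_def
proof
  fix N
  obtain L where L: "\<And>n a. L \<le> n \<Longrightarrow> std_index d n a \<Longrightarrow>
      \<exists>n' a'. N \<le> n' \<and> std_index d n' a' \<and> std_map d f n a n' a'"
    using assms(2) unfolding locally_std_def eventually_sequentially by meson
  show "\<forall>\<^sub>F n in sequentially. \<forall>a. std_index d n a \<longrightarrow>
      (\<exists>n' a'. N \<le> n' \<and> std_index d n' a' \<and> std_map d (f \<circ> g) n a n' a')"
    using assms(3) unfolding locally_std_def
  proof (rule eventually_mono[OF spec[of _ L]], intro allI impI)
    fix n a assume "\<forall>a. std_index d n a \<longrightarrow> (\<exists>n' a'. L \<le> n' \<and> std_index d n' a' \<and> std_map d g n a n' a')"
      and "std_index d n a"
    then obtain n' a' where "L \<le> n'" "std_index d n' a'" "std_map d g n a n' a'"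
      by blast
    then show "\<exists>n' a'. N \<le> n' \<and> std_index d n' a' \<and> std_map d (f \<circ> g) n a n' a'"
      using L std_map_comp[OF assms(1)] by meson
  qed
qed

lemma inv_std_map_fine:
  assumes d0: "d > 0" and "perm01 f"
    and coarse: "\<And>a. std_index d L a \<Longrightarrow> \<exists>n' a'. n' \<le> M \<and> std_map d f L a n' a'"
    and "M \<le> n" "std_index d n b"
  shows "\<exists>n' b'. L + (n - M) \<le> n' \<and> std_index d n' b' \<and> std_map d (inv f) n b n' b'"
proof -
  define y where "y = real_of_int b / real d ^ n"
  have y: "y \<in> std_ivl d n b"
    unfolding y_def using left_endpoint_in_std_ivl[OF d0] .
  then have "y \<in> {0..<1}"
    using assms(5) std_index_iff_subset[OF d0] by blast
  then obtain x where x: "x \<in> {0..<1}" "f x = y"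
    using assms(2) unfolding perm01_def bij_betw_def by (metis imageE)
  define a where "a = \<lfloor>x * real d ^ L\<rfloor>"
  have "x \<in> std_ivl d L a" "std_index d L a"
    using floor_std_ivl[OF d0, of x L] x(1) unfolding a_def by auto
  moreover obtain n' a' where n': "n' \<le> M" and f_map: "std_map d f L a n' a'"
    using coarse calculation(2) by blast
  ultimately have "y \<in> std_ivl d n' a'"
    using std_map_image[OF d0 f_map] x(2) by blast
  obtain j where j: "n = n' + j"
    using n' assms(4) le_Suc_ex by (metis le_trans)
  have "std_ivl d (n' + j) b \<subseteq> std_ivl d n' a'"
    using std_ivl_nested[OF d0 _ y \<open>y \<in> std_ivl d n' a'\<close>] j by simp
  moreover have "std_map d (inv f) n' a' L a"
    using std_map_inv[OF d0 f_map] perm01_bij[OF assms(2)] bij_is_inj by blast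
  ultimately have inv_map: "std_map d (inv f) n b (L + j) (a * int d ^ j + b - a' * int d ^ j)"
    using std_map_refine[OF d0] j by simp
  moreover have "std_index d (L + j) (a * int d ^ j + b - a' * int d ^ j)"
    using std_map_std_index[OF d0 inv_map assms(5)] perm01_image_subset perm01_inv assms(2) by blast
  moreover have "L + (n - M) \<le> L + j"
    using j n' by simp
  ultimately show ?thesis
    by blast
qed

lemma locally_std_inv:
  assumes d0: "d > 0" and "perm01 f" "locally_std d f"
  shows "locally_std d (inv f)"
  unfolding locally_std_def
proof
  fix N
  obtain L where L: "\<And>a. std_index d L a \<Longrightarrow> \<exists>n' a'. std_index d n' a' \<and> std_map d f L a n' a'"
    using assms(3) unfolding locally_std_def eventually_sequentially by (meson order_refl zero_le)
  have "\<forall>\<^sub>F M in sequentially. \<forall>a\<in>{0..<int d ^ L}. \<exists>n' a'. n' \<le> M \<and> std_map d f L a n' a'"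
  proof (rule eventually_ball_finite[OF finite_atLeastLessThan_int], rule ballI)
    fix a assume "a \<in> {0..<int d ^ L}"
    then have "std_index d L a"
      unfolding std_index_def by simp
    then obtain n' a' where "std_map d f L a n' a'"
      using L by blast
    then show "\<forall>\<^sub>F M in sequentially. \<exists>n' a'. n' \<le> M \<and> std_map d f L a n' a'"
      unfolding eventually_sequentially by blast
  qed
  then obtain M where "\<forall>a\<in>{0..<int d ^ L}. \<exists>n' a'. n' \<le> M \<and> std_map d f L a n' a'"
    unfolding eventually_sequentially by blast
  then have M: "\<And>a. std_index d L a \<Longrightarrow> \<exists>n' a'. n' \<le> M \<and> std_map d f L a n' a'"
    unfolding std_index_def by simp
  show "\<forall>\<^sub>F n in sequentially. \<forall>b. std_index d n b \<longrightarrow>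
      (\<exists>n' b'. N \<le> n' \<and> std_index d n' b' \<and> std_map d (inv f) n b n' b')"
    using eventually_ge_at_top[of "M + N"]
  proof eventually_elim
    case (elim n)
    show ?case
    proof (intro allI impI)
      fix b assume "std_index d n b"
      then obtain n' b' where "L + (n - M) \<le> n'" "std_index d n' b'" "std_map d (inv f) n b n' b'"
        using inv_std_map_fine[OF d0 assms(2) M] elim by (meson le_add1 le_trans)
      moreover have "N \<le> L + (n - M)"
        using elim by simp
      ultimately show "\<exists>n' b'. N \<le> n' \<and> std_index d n' b' \<and> std_map d (inv f) n b n' b'"
        using le_trans by blast
    qed
  qed
qed

lemma Vd_iff:
  assumes "d \<ge> 2"
  shows "f \<in> Vd d \<longleftrightarrow> perm01 f \<and> locally_std d f"
  using Vd_perm01 Vd_imp_locally_std locally_std_imp_Vd assms by blast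

lemma id_in_Vd: "d \<ge> 2 \<Longrightarrow> id \<in> Vd d"
  using Vd_iff perm01_id locally_std_id by simp

lemma comp_in_Vd: "d \<ge> 2 \<Longrightarrow> f \<in> Vd d \<Longrightarrow> g \<in> Vd d \<Longrightarrow> f \<circ> g \<in> Vd d"
  using Vd_iff perm01_comp locally_std_comp by simp

lemma inv_in_Vd: "d \<ge> 2 \<Longrightarrow> f \<in> Vd d \<Longrightarrow> inv f \<in> Vd d"
  using Vd_iff perm01_inv locally_std_inv by simp

section \<open>Elements of \<open>V_d\<close> moving \<open>[0,1/d)\<close> onto a standard interval\<close>

lemma bij_betw_affine_atLeastLessThan:
  fixes s :: real
  assumes "s > 0" "\<And>x. x \<in> {A..<B} \<Longrightarrow> f x = c + (x - A) * s"
  shows "bij_betw f {A..<B} {c..<c + (B - A) * s}"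
  unfolding bij_betw_def
proof
  show "inj_on f {A..<B}"
    using assms by (intro inj_onI) auto
  have "f ` {A..<B} = (\<lambda>x. c + (x - A) * s) ` {A..<B}"
    using assms(2) by (rule image_cong[OF refl])
  then show "f ` {A..<B} = {c..<c + (B - A) * s}"
    using image_affine_atLeastLessThan[OF assms(1)] by simp
qed

lemma bij_betw_glue_atLeastLessThan:
  fixes a b b' c e e' :: real
  assumes "bij_betw f {a..<b} {c..<e}" "bij_betw f {b..<b'} {e..<e'}"
    and "a \<le> b" "b \<le> b'" "c \<le> e" "e \<le> e'"
  shows "bij_betw f {a..<b'} {c..<e'}"
proof -
  have "bij_betw f ({a..<b} \<union> {b..<b'}) ({c..<e} \<union> {e..<e'})"
    using assms(1,2) by (rule bij_betw_combine) auto
  then show ?thesis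
    using assms(3-6) by (simp add: ivl_disj_un_two(3))
qed

definition swap_ivl :: "nat \<Rightarrow> nat \<Rightarrow> int \<Rightarrow> real \<Rightarrow> real" where
  "swap_ivl d n a x = (if x \<in> std_ivl d n 0 then x + real_of_int a / real d ^ n
     else if x \<in> std_ivl d n a then x - real_of_int a / real d ^ n else x)"

lemma swap_ivl_involution:
  assumes "d > 0"
  shows "swap_ivl d n a (swap_ivl d n a x) = x"
proof -
  have shift: "x + real_of_int a / real d ^ n \<in> std_ivl d n a \<longleftrightarrow> x \<in> std_ivl d n 0" for x
    unfolding std_ivl_def by (auto simp: add_divide_distrib)
  have disj: "x \<in> std_ivl d n 0 \<Longrightarrow> x \<in> std_ivl d n a \<Longrightarrow> a = 0" for x
    using std_ivl_disjoint[OF assms, of 0 a n] by auto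
  show ?thesis
    unfolding swap_ivl_def using shift[of x] shift[of "x - real_of_int a / real d ^ n"] disj by auto
qed

lemma swap_ivl_perm01:
  assumes "d > 0" "std_index d n a"
  shows "perm01 (swap_ivl d n a)"
proof -
  have "std_index d n 0"
    using assms unfolding std_index_def by simp
  then have sub: "std_ivl d n 0 \<subseteq> {0..<1}" "std_ivl d n a \<subseteq> {0..<1}"
    using assms std_index_iff_subset by blast+
  have "x + real_of_int a / real d ^ n \<in> std_ivl d n a" if "x \<in> std_ivl d n 0" for x
    using that unfolding std_ivl_def by (auto simp: add_divide_distrib)
  moreover have "x - real_of_int a / real d ^ n \<in> std_ivl d n 0" if "x \<in> std_ivl d n a" for x
    using that unfolding std_ivl_def by (auto simp: diff_divide_distrib add_divide_distrib)
  ultimately have "swap_ivl d n a ` {0..<1} \<subseteq> {0..<1}"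
    unfolding swap_ivl_def using sub by auto
  then have "bij_betw (swap_ivl d n a) {0..<1} {0..<1}"
    by (intro bij_betw_byWitness[where f' = "swap_ivl d n a"]) (auto simp: swap_ivl_involution assms(1))
  moreover have "swap_ivl d n a x = x" if "x \<notin> {0..<1}" for x
    using that sub unfolding swap_ivl_def by auto
  ultimately show ?thesis
    unfolding perm01_def by auto
qed

lemma swap_ivl_in_Vd:
  assumes d: "d \<ge> 2" and "std_index d n a"
  shows "swap_ivl d n a \<in> Vd d"
proof -
  have d0: "d > 0"
    using d by simp
  have "locally_std d (swap_ivl d n a)"
  proof (rule locally_std_if_affine_pieces[OF d swap_ivl_perm01[OF d0 assms(2)]])
    fix k
    define c where "c = (if k = 0 then a else if k = a then - a else 0)"
    have "\<forall>x\<in>std_ivl d n k. swap_ivl d n a x = real d powi 0 * x + real_of_int c / real d ^ n"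
      using std_ivl_disjoint[OF d0, of k 0 n] std_ivl_disjoint[OF d0, of k a n]
      unfolding swap_ivl_def c_def by auto
    moreover have "dadic d (real_of_int c / real d ^ n)"
      unfolding dadic_def by blast
    ultimately show "\<exists>(kk::int) b. dadic d b \<and> (\<forall>x\<in>std_ivl d n k. swap_ivl d n a x = real d powi kk * x + b)"
      by blast
  qed
  then show ?thesis
    using Vd_iff[OF d] swap_ivl_perm01[OF d0 assms(2)] by blast
qed

text \<open>\<open>shrink d\<close> is the element of \<open>V_d\<close> that is \<open>x \<mapsto> x/d\<close> on \<open>[0,1/d)\<close>; the rest of
  \<open>[0,2/d)\<close> is rearranged in two pieces to fill the gap \<open>[1/d\<^sup>2,2/d)\<close>.\<close>

definition shrink :: "nat \<Rightarrow> real \<Rightarrow> real" where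
  "shrink d x = (if x < 0 then x
     else if x < 1 / real d then x / real d
     else if x < 2 / real d - 1 / real d ^ 2 then x - 1 / real d + 1 / real d ^ 2
     else if x < 2 / real d then real d * x - 2 + 2 / real d
     else x)"

lemma shrink_breakpoints:
  assumes "d \<ge> 2"
  shows "0 < 1 / real d ^ 2" "1 / real d ^ 2 < 1 / real d" "1 / real d < 2 / real d - 1 / real d ^ 2"
    "2 / real d \<le> 1"
proof -
  have D: "real d \<ge> 2"
    using assms by simp
  then show "0 < 1 / real d ^ 2" "2 / real d \<le> 1"
    by simp_all
  have "1 / real d ^ 2 < 1 / real d"
    using D by (simp add: power2_eq_square divide_simps)
  then show "1 / real d ^ 2 < 1 / real d" "1 / real d < 2 / real d - 1 / real d ^ 2"
    by simp_all
qed

lemma shrink_pieces: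
  assumes "d \<ge> 2"
  shows "x \<in> {0..<1 / real d} \<Longrightarrow> shrink d x = 0 + (x - 0) * (1 / real d)"
    and "x \<in> {1 / real d..<2 / real d - 1 / real d ^ 2} \<Longrightarrow> shrink d x = 1 / real d ^ 2 + (x - 1 / real d) * 1"
    and "x \<in> {2 / real d - 1 / real d ^ 2..<2 / real d} \<Longrightarrow>
      shrink d x = 1 / real d + (x - (2 / real d - 1 / real d ^ 2)) * real d"
    and "x \<in> {2 / real d..<1} \<Longrightarrow> shrink d x = 2 / real d + (x - 2 / real d) * 1"
    and "x \<notin> {0..<1} \<Longrightarrow> shrink d x = x"
proof -
  note b = shrink_breakpoints[OF assms]
  have D: "real d > 0"
    using assms by simp
  show "shrink d x = 0 + (x - 0) * (1 / real d)" if "x \<in> {0..<1 / real d}"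
  proof -
    have "\<not> x < 0" "x < 1 / real d"
      using that by auto
    then show ?thesis
      by (simp add: shrink_def)
  qed
  show "shrink d x = 1 / real d ^ 2 + (x - 1 / real d) * 1" if "x \<in> {1 / real d..<2 / real d - 1 / real d ^ 2}"
  proof -
    have "\<not> x < 0" "\<not> x < 1 / real d" "x < 2 / real d - 1 / real d ^ 2"
      using that b unfolding atLeastLessThan_iff by linarith+
    then show ?thesis
      by (simp add: shrink_def)
  qed
  show "shrink d x = 1 / real d + (x - (2 / real d - 1 / real d ^ 2)) * real d"
    if "x \<in> {2 / real d - 1 / real d ^ 2..<2 / real d}"
  proof -
    have "\<not> x < 0" "\<not> x < 1 / real d" "\<not> x < 2 / real d - 1 / real d ^ 2" "x < 2 / real d"
      using that b unfolding atLeastLessThan_iff by linarith+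
    then show ?thesis
      using D by (simp add: shrink_def algebra_simps power2_eq_square)
  qed
  show "shrink d x = 2 / real d + (x - 2 / real d) * 1" if "x \<in> {2 / real d..<1}"
  proof -
    have "\<not> x < 0" "\<not> x < 1 / real d" "\<not> x < 2 / real d - 1 / real d ^ 2" "\<not> x < 2 / real d"
      using that b unfolding atLeastLessThan_iff by linarith+
    then show ?thesis
      by (simp add: shrink_def)
  qed
  show "shrink d x = x" if "x \<notin> {0..<1}"
  proof -
    have "x < 0 \<or> (\<not> x < 0 \<and> \<not> x < 1 / real d \<and> \<not> x < 2 / real d - 1 / real d ^ 2 \<and> \<not> x < 2 / real d)"
      using that b unfolding atLeastLessThan_iff by linarith+
    then show ?thesis
      by (auto simp: shrink_def)
  qed
qed

lemma shrink_perm01: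
  assumes d: "d \<ge> 2"
  shows "perm01 (shrink d)"
proof -
  note b = shrink_breakpoints[OF d] and p = shrink_pieces[OF d]
  have D: "real d > 0"
    using d by simp
  have "bij_betw (shrink d) {0..<1 / real d} {0..<1 / real d ^ 2}"
    using bij_betw_affine_atLeastLessThan[where s = "1 / real d" and A = 0 and B = "1 / real d" and c = 0,
        OF _ p(1)] D
    by (simp add: power2_eq_square)
  moreover have "bij_betw (shrink d) {1 / real d..<2 / real d - 1 / real d ^ 2} {1 / real d ^ 2..<1 / real d}"
    using bij_betw_affine_atLeastLessThan[where s = 1 and A = "1 / real d"
        and B = "2 / real d - 1 / real d ^ 2" and c = "1 / real d ^ 2", OF _ p(2)] by simp
  ultimately have "bij_betw (shrink d) {0..<2 / real d - 1 / real d ^ 2} {0..<1 / real d}"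
    by (rule bij_betw_glue_atLeastLessThan) (use b in linarith)+
  moreover have "bij_betw (shrink d) {2 / real d - 1 / real d ^ 2..<2 / real d} {1 / real d..<2 / real d}"
    using bij_betw_affine_atLeastLessThan[where s = "real d" and A = "2 / real d - 1 / real d ^ 2"
        and B = "2 / real d" and c = "1 / real d", OF _ p(3)] D
    by (simp add: power2_eq_square field_simps)
  ultimately have "bij_betw (shrink d) {0..<2 / real d} {0..<2 / real d}"
    by (rule bij_betw_glue_atLeastLessThan) (use b in linarith)+
  moreover have "bij_betw (shrink d) {2 / real d..<1} {2 / real d..<1}"
    using bij_betw_affine_atLeastLessThan[where s = 1 and A = "2 / real d" and B = 1 and c = "2 / real d",
        OF _ p(4)] by simp
  ultimately have "bij_betw (shrink d) {0..<1} {0..<1}"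
    by (rule bij_betw_glue_atLeastLessThan) (use b in linarith)+
  then show ?thesis
    unfolding perm01_def using p(5) by blast
qed

lemma std_ivl_subset_atLeastLessThan:
  assumes "d > 0" "P \<le> k" "k + 1 \<le> Q"
  shows "std_ivl d n k \<subseteq> {real_of_int P / real d ^ n..<real_of_int Q / real d ^ n}"
proof -
  have "real_of_int P \<le> real_of_int k" "real_of_int k + 1 \<le> real_of_int Q"
    using assms(2,3) by linarith+
  then have "real_of_int P / real d ^ n \<le> real_of_int k / real d ^ n"
    "(real_of_int k + 1) / real d ^ n \<le> real_of_int Q / real d ^ n"
    using assms(1) by (simp_all add: divide_right_mono)
  then show ?thesis
    unfolding std_ivl_def by auto
qed

lemma std_ivl_level2_cases:
  assumes d: "d \<ge> 2" and "std_index d 2 k"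
  obtains "std_ivl d 2 k \<subseteq> {0..<1 / real d}"
    | "std_ivl d 2 k \<subseteq> {1 / real d..<2 / real d - 1 / real d ^ 2}"
    | "std_ivl d 2 k \<subseteq> {2 / real d - 1 / real d ^ 2..<2 / real d}"
    | "std_ivl d 2 k \<subseteq> {2 / real d..<1}"
proof -
  have d0: "d > 0"
    using d by simp
  have D: "real d > 0"
    using d by simp
  have breaks: "real_of_int 0 / real d ^ 2 = 0" "real_of_int (int d) / real d ^ 2 = 1 / real d"
    "real_of_int (2 * int d - 1) / real d ^ 2 = 2 / real d - 1 / real d ^ 2"
    "real_of_int (2 * int d) / real d ^ 2 = 2 / real d" "real_of_int (int d ^ 2) / real d ^ 2 = 1"
    using D by (simp_all add: power2_eq_square field_simps)
  have "k + 1 \<le> int d ^ 2" "0 \<le> k"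
    using assms(2) unfolding std_index_def by simp_all
  then consider "0 \<le> k" "k + 1 \<le> int d" | "int d \<le> k" "k + 1 \<le> 2 * int d - 1"
    | "2 * int d - 1 \<le> k" "k + 1 \<le> 2 * int d" | "2 * int d \<le> k" "k + 1 \<le> int d ^ 2"
    by linarith
  then show ?thesis
  proof cases
    case 1
    then show ?thesis
      using that(1) std_ivl_subset_atLeastLessThan[OF d0 1, of 2] unfolding breaks by blast
  next
    case 2
    then show ?thesis
      using that(2) std_ivl_subset_atLeastLessThan[OF d0 2, of 2] unfolding breaks by blast
  next
    case 3
    then show ?thesis
      using that(3) std_ivl_subset_atLeastLessThan[OF d0 3, of 2] unfolding breaks by blast
  next
    case 4
    then show ?thesis
      using that(4) std_ivl_subset_atLeastLessThan[OF d0 4, of 2] unfolding breaks by blast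
  qed
qed

lemma affine_dadic_on_subset:
  assumes "S \<subseteq> P" "\<And>x. x \<in> P \<Longrightarrow> f x = c + (x - A) * s"
    and "s = real d powi k" "c - A * s = real_of_int z / real d ^ e"
  shows "\<exists>(kk::int) b. dadic d b \<and> (\<forall>x\<in>S. f x = real d powi kk * x + b)"
proof (intro exI conjI ballI)
  show "dadic d (real_of_int z / real d ^ e)"
    unfolding dadic_def by blast
  fix x assume "x \<in> S"
  then have "f x = s * x + (c - A * s)"
    using assms(1,2) by (auto simp: algebra_simps)
  then show "f x = real d powi k * x + real_of_int z / real d ^ e"
    unfolding assms(3,4)[symmetric] by simp
qed

lemma shrink_in_Vd:
  assumes d: "d \<ge> 2"
  shows "shrink d \<in> Vd d"
proof -
  have D: "real d > 0"
    using d by simp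
  note p = shrink_pieces[OF d]
  have "locally_std d (shrink d)"
  proof (rule locally_std_if_affine_pieces[OF d shrink_perm01[OF d]])
    fix k assume "std_index d 2 k"
    then consider "std_ivl d 2 k \<subseteq> {0..<1 / real d}"
      | "std_ivl d 2 k \<subseteq> {1 / real d..<2 / real d - 1 / real d ^ 2}"
      | "std_ivl d 2 k \<subseteq> {2 / real d - 1 / real d ^ 2..<2 / real d}"
      | "std_ivl d 2 k \<subseteq> {2 / real d..<1}"
      by (rule std_ivl_level2_cases[OF d])
    then show "\<exists>(kk::int) b. dadic d b \<and> (\<forall>x\<in>std_ivl d 2 k. shrink d x = real d powi kk * x + b)"
    proof cases
      case 1
      show ?thesis
        by (rule affine_dadic_on_subset[OF 1 p(1), where k = "- 1" and z = 0 and e = 0])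
          (simp_all add: power_int_minus divide_inverse)
    next
      case 2
      show ?thesis
        by (rule affine_dadic_on_subset[OF 2 p(2), where k = 0 and z = "1 - int d" and e = 2])
          (use D in \<open>simp_all add: field_simps power2_eq_square\<close>)
    next
      case 3
      show ?thesis
        by (rule affine_dadic_on_subset[OF 3 p(3), where k = 1 and z = "2 - 2 * int d" and e = 1])
          (use D in \<open>simp_all add: field_simps power2_eq_square\<close>)
    next
      case 4
      show ?thesis
        by (rule affine_dadic_on_subset[OF 4 p(4), where k = 0 and z = 0 and e = 0]) simp_all
    qed
  qed
  then show ?thesis
    using Vd_iff[OF d] shrink_perm01[OF d] by blast
qed

lemma shrink_pow_in_Vd: "d \<ge> 2 \<Longrightarrow> shrink d ^^ j \<in> Vd d"
  by (induction j) (simp_all add: id_in_Vd comp_in_Vd shrink_in_Vd)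

lemma shrink_pow_first:
  assumes d: "d \<ge> 2" and x: "0 \<le> x" "x < 1 / real d"
  shows "(shrink d ^^ j) x = x / real d ^ j"
proof (induction j)
  case (Suc j)
  have "real d ^ j \<ge> 1"
    using d by simp
  then have "x / real d ^ j \<le> x"
    using x by (simp add: divide_le_eq mult_le_cancel_left1 mult.commute)
  then have "x / real d ^ j \<in> {0..<1 / real d}"
    using x by simp
  then show ?case
    using Suc shrink_pieces(1)[OF d] by (simp add: mult.commute)
qed simp

definition std_embed :: "nat \<Rightarrow> nat \<Rightarrow> int \<Rightarrow> real \<Rightarrow> real" where
  "std_embed d n a = swap_ivl d n a \<circ> shrink d ^^ (n - 1)"

lemma std_embed_in_Vd: "d \<ge> 2 \<Longrightarrow> std_index d n a \<Longrightarrow> std_embed d n a \<in> Vd d"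
  unfolding std_embed_def using comp_in_Vd swap_ivl_in_Vd shrink_pow_in_Vd by blast

lemma std_map_std_embed:
  assumes d: "d \<ge> 2" and n: "1 \<le> n"
  shows "std_map d (std_embed d n a) 1 0 n a"
  unfolding std_map_def
proof
  fix x assume "x \<in> std_ivl d 1 0"
  then have x: "0 \<le> x" "x < 1 / real d"
    unfolding std_ivl_1_0 by auto
  have D: "real d > 0"
    using d by simp
  obtain m where m: "n = m + 1"
    using n by (metis add.commute le_Suc_ex)
  have "x / real d ^ m < 1 / real d / real d ^ m"
    by (rule divide_strict_right_mono) (use x D in auto)
  then have "x / real d ^ m \<in> std_ivl d n 0"
    using x D m unfolding std_ivl_def by (simp add: mult.commute)
  then have "std_embed d n a x = x / real d ^ m + real_of_int a / real d ^ n"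
    unfolding std_embed_def swap_ivl_def using shrink_pow_first[OF d x] m by simp
  also have "\<dots> = real_of_int a / real d ^ n + (x - real_of_int 0 / real d ^ 1) * (real d ^ 1 / real d ^ n)"
    using D m by (simp add: field_simps)
  finally show "std_embed d n a x = real_of_int a / real d ^ n
      + (x - real_of_int 0 / real d ^ 1) * (real d ^ 1 / real d ^ n)" .
qed

lemma std_embed_inj: "d \<ge> 2 \<Longrightarrow> std_index d n a \<Longrightarrow> inj (std_embed d n a)"
  using std_embed_in_Vd perm01_bij Vd_perm01 bij_is_inj by blast

section \<open>The set \<open>X\<close> of cosets\<close>

lemma coset_self:
  assumes "d \<ge> 2"
  shows "g \<in> coset d g"
proof -
  have "id \<in> Vsub d"
    unfolding Vsub_def using id_in_Vd[OF assms] by simp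
  then show ?thesis
    unfolding coset_def using image_eqI[of g "\<lambda>h. g \<circ> h" id] by simp
qed

lemma coset_subset_if_agree:
  assumes d: "d \<ge> 2" and "a \<in> Vd d" "b \<in> Vd d" and agree: "\<forall>x\<in>{0..<1 / real d}. a x = b x"
  shows "coset d a \<subseteq> coset d b"
proof
  fix c assume "c \<in> coset d a"
  then obtain h where h: "h \<in> Vsub d" "c = a \<circ> h"
    unfolding coset_def by auto
  have b: "bij b"
    using perm01_bij Vd_perm01 assms(3) by blast
  define h' where "h' = inv b \<circ> a \<circ> h"
  have "h' \<in> Vd d"
    unfolding h'_def using comp_in_Vd[OF d] inv_in_Vd[OF d assms(3)] assms(2) h(1)
    unfolding Vsub_def by blast
  moreover have "h' x = x" if "x \<in> {0..<1 / real d}" for x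
  proof -
    have "h x = x"
      using h(1) that unfolding Vsub_def by auto
    then show ?thesis
      unfolding h'_def using agree that b by (simp add: bij_is_inj)
  qed
  ultimately have "h' \<in> Vsub d"
    unfolding Vsub_def by auto
  moreover have "b \<circ> h' = c"
    unfolding h'_def h(2) using b by (simp add: fun_eq_iff bij_is_surj surj_f_inv_f)
  ultimately show "c \<in> coset d b"
    unfolding coset_def by auto
qed

lemma coset_eq_iff:
  assumes d: "d \<ge> 2" and "a \<in> Vd d" "b \<in> Vd d"
  shows "coset d a = coset d b \<longleftrightarrow> (\<forall>x\<in>{0..<1 / real d}. a x = b x)"
proof
  assume "coset d a = coset d b"
  then obtain h where "h \<in> Vsub d" "a = b \<circ> h"
    using coset_self[OF d, of a] unfolding coset_def by auto
  then show "\<forall>x\<in>{0..<1 / real d}. a x = b x"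
    unfolding Vsub_def by auto
next
  assume "\<forall>x\<in>{0..<1 / real d}. a x = b x"
  then show "coset d a = coset d b"
    using coset_subset_if_agree[OF d] assms by (metis subset_antisym)
qed

lemma act_coset: "act v (coset d g) = coset d (v \<circ> g)"
  unfolding act_def coset_def by (auto simp: image_image o_assoc)

lemma act_comp: "act v (act w C) = act (v \<circ> w) C"
  unfolding act_def by (auto simp: image_image o_assoc)

lemma coset_in_Xset_iff:
  assumes d: "d \<ge> 2" and g: "g \<in> Vd d"
  shows "coset d g \<in> Xset d \<longleftrightarrow> std_affine d g {0..<1 / real d}"
proof
  assume "coset d g \<in> Xset d"
  then obtain h where h: "h \<in> Vd d" "std_affine d h {0..<1 / real d}" "coset d g = coset d h"
    unfolding Xset_def by auto
  then have "g ` {0..<1 / real d} = h ` {0..<1 / real d}" "\<forall>x\<in>{0..<1 / real d}. g x = h x"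
    using coset_eq_iff[OF d g h(1)] by (auto simp: image_def)
  then show "std_affine d g {0..<1 / real d}"
    using h(2) unfolding std_affine_def by auto
qed (use g in \<open>auto simp: Xset_def\<close>)

lemma std_affine_comp_iff:
  assumes d0: "d > 0" and g: "std_map d g 1 0 n a" "inj g"
  shows "std_affine d (v \<circ> g) {0..<1 / real d} \<longleftrightarrow> std_affine d v (std_ivl d n a)"
proof
  assume "std_affine d (v \<circ> g) {0..<1 / real d}"
  then have "std_affine d (v \<circ> g) (std_ivl d 1 0)"
    unfolding std_ivl_1_0 .
  then obtain n' a' where idx: "std_index d n' a'" and vg: "std_map d (v \<circ> g) 1 0 n' a'"
    by (rule std_affine_imp_std_map[OF d0])
  have "std_map d ((v \<circ> g) \<circ> inv g) n a n' a'"
    using std_map_comp[OF d0 std_map_inv[OF d0 g] vg] .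
  moreover have "((v \<circ> g) \<circ> inv g) y = v y" if "y \<in> std_ivl d n a" for y
  proof -
    have "y \<in> g ` std_ivl d 1 0"
      using that std_map_image[OF d0 g(1)] by simp
    then obtain w where "y = g w"
      by blast
    then show ?thesis
      using g(2) by simp
  qed
  ultimately have "std_map d v n a n' a'"
    using std_map_cong[where f = "(v \<circ> g) \<circ> inv g" and g = v] by blast
  then show "std_affine d v (std_ivl d n a)"
    using std_map_std_affine[OF d0 _ idx] by blast
next
  assume "std_affine d v (std_ivl d n a)"
  then obtain n' a' where idx: "std_index d n' a'" and v: "std_map d v n a n' a'"
    by (rule std_affine_imp_std_map[OF d0])
  have "std_affine d (v \<circ> g) (std_ivl d 1 0)"
    using std_map_std_affine[OF d0 std_map_comp[OF d0 g(1) v] idx] .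
  then show "std_affine d (v \<circ> g) {0..<1 / real d}"
    unfolding std_ivl_1_0 .
qed

definition ivl_index :: "nat \<Rightarrow> (nat \<times> int) set" where
  "ivl_index d = {(n, a). 1 \<le> n \<and> std_index d n a}"

lemma std_map_first_level_pos:
  assumes d: "d \<ge> 2" and "perm01 g" "std_map d g 1 0 n a" "std_index d n a"
  shows "1 \<le> n"
proof (rule ccontr)
  assume "\<not> 1 \<le> n"
  then have "n = 0"
    by simp
  moreover from this have "a = 0"
    using assms(4) unfolding std_index_def by simp
  ultimately have onto: "g ` {0..<1 / real d} = {0..<1}"
    using std_map_image[OF _ assms(3)] d unfolding std_ivl_1_0 by (simp add: std_ivl_def)
  have "1 / real d \<in> {0..<1}"
    using d by auto
  then have "g (1 / real d) \<in> g ` {0..<1 / real d}"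
    using perm01_image_subset[OF assms(2)] unfolding onto by blast
  then obtain x where "x \<in> {0..<1 / real d}" "g x = g (1 / real d)"
    by auto
  then show False
    using perm01_bij[OF assms(2)] by (auto dest: bij_is_inj injD)
qed

lemma Xset_eq:
  assumes d: "d \<ge> 2"
  shows "Xset d = (\<lambda>(n, a). coset d (std_embed d n a)) ` ivl_index d"
proof
  have d0: "d > 0"
    using d by simp
  show "Xset d \<subseteq> (\<lambda>(n, a). coset d (std_embed d n a)) ` ivl_index d"
  proof
    fix C assume "C \<in> Xset d"
    then obtain g where g: "g \<in> Vd d" "std_affine d g (std_ivl d 1 0)" "C = coset d g"
      unfolding Xset_def std_ivl_1_0 by auto
    obtain n a where idx: "std_index d n a" and map: "std_map d g 1 0 n a"
      using std_affine_imp_std_map[OF d0 g(2)] by blast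
    have n: "1 \<le> n"
      using std_map_first_level_pos[OF d Vd_perm01[OF g(1)] map idx] .
    have "\<forall>x\<in>{0..<1 / real d}. g x = std_embed d n a x"
      using map std_map_std_embed[OF d n, of a] unfolding std_map_def std_ivl_1_0[symmetric] by simp
    then have "C = coset d (std_embed d n a)"
      using coset_eq_iff[OF d g(1) std_embed_in_Vd[OF d idx]] g(3) by simp
    then show "C \<in> (\<lambda>(n, a). coset d (std_embed d n a)) ` ivl_index d"
      using n idx unfolding ivl_index_def by auto
  qed
  show "(\<lambda>(n, a). coset d (std_embed d n a)) ` ivl_index d \<subseteq> Xset d"
  proof clarify
    fix n a assume "(n, a) \<in> ivl_index d"
    then have n: "1 \<le> n" and idx: "std_index d n a"
      unfolding ivl_index_def by auto
    have "std_affine d (std_embed d n a) (std_ivl d 1 0)"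
      using std_map_std_affine[OF d0 std_map_std_embed[OF d n] idx] .
    then show "coset d (std_embed d n a) \<in> Xset d"
      unfolding Xset_def std_ivl_1_0 using std_embed_in_Vd[OF d idx] by blast
  qed
qed

lemma act_Xset_eq:
  assumes "d \<ge> 2"
  shows "act v ` Xset d = (\<lambda>(n, a). coset d (v \<circ> std_embed d n a)) ` ivl_index d"
  unfolding Xset_eq[OF assms] image_image by (simp add: act_coset case_prod_beta)

lemma coset_std_embed_in_Xset_iff:
  assumes d: "d \<ge> 2" and v: "v \<in> Vd d" and na: "(n, a) \<in> ivl_index d"
  shows "coset d (v \<circ> std_embed d n a) \<in> Xset d \<longleftrightarrow> std_affine d v (std_ivl d n a)"
proof -
  have n: "1 \<le> n" and idx: "std_index d n a"
    using na unfolding ivl_index_def by auto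
  show ?thesis
    using coset_in_Xset_iff[OF d comp_in_Vd[OF d v std_embed_in_Vd[OF d idx]]]
      std_affine_comp_iff[OF _ std_map_std_embed[OF d n] std_embed_inj[OF d idx]] d by simp
qed

lemma inj_on_coset_std_embed:
  assumes d: "d \<ge> 2" and v: "v \<in> Vd d"
  shows "inj_on (\<lambda>(n, a). coset d (v \<circ> std_embed d n a)) (ivl_index d)"
proof (rule inj_onI, clarify)
  fix n a m b assume "(n, a) \<in> ivl_index d" "(m, b) \<in> ivl_index d"
    and eq: "coset d (v \<circ> std_embed d n a) = coset d (v \<circ> std_embed d m b)"
  then have n: "1 \<le> n" "std_index d n a" and m: "1 \<le> m" "std_index d m b"
    unfolding ivl_index_def by auto
  have "inj v"
    using v Vd_perm01 perm01_bij bij_is_inj by blast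
  then have "\<forall>x\<in>{0..<1 / real d}. std_embed d n a x = std_embed d m b x"
    using eq coset_eq_iff[OF d comp_in_Vd[OF d v std_embed_in_Vd[OF d n(2)]]
        comp_in_Vd[OF d v std_embed_in_Vd[OF d m(2)]]] by (simp add: inj_eq)
  then have "std_embed d n a ` std_ivl d 1 0 = std_embed d m b ` std_ivl d 1 0"
    unfolding std_ivl_1_0 by (auto simp: image_def)
  moreover have "std_embed d n a ` std_ivl d 1 0 = std_ivl d n a" "std_embed d m b ` std_ivl d 1 0 = std_ivl d m b"
    using std_map_image[OF _ std_map_std_embed[OF d n(1)]] std_map_image[OF _ std_map_std_embed[OF d m(1)]] d
    by simp_all
  ultimately have "std_ivl d n a = std_ivl d m b"
    by simp
  then show "n = m \<and> a = b"
    using std_ivl_inj[OF d] by blast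
qed

definition nonstd_ivls :: "nat \<Rightarrow> (real \<Rightarrow> real) \<Rightarrow> (nat \<times> int) set" where
  "nonstd_ivls d v = {(n, a) \<in> ivl_index d. \<not> std_affine d v (std_ivl d n a)}"

lemma act_Xset_diff_Xset:
  assumes d: "d \<ge> 2" and v: "v \<in> Vd d"
  shows "act v ` Xset d - Xset d = (\<lambda>(n, a). coset d (v \<circ> std_embed d n a)) ` nonstd_ivls d v"
  unfolding act_Xset_eq[OF d] nonstd_ivls_def
  using coset_std_embed_in_Xset_iff[OF d v] by auto

lemma act_inv_mem_iff:
  assumes "bij v"
  shows "act (inv v) C \<in> A \<longleftrightarrow> C \<in> act v ` A"
proof -
  have "v \<circ> inv v = id" "inv v \<circ> v = id"
    using assms by (simp_all add: fun_eq_iff bij_is_surj surj_f_inv_f bij_is_inj)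
  then have "act v (act (inv v) C) = C" "\<And>D. act (inv v) (act v D) = D"
    unfolding act_comp by (simp_all add: act_def)
  then show ?thesis
    by (metis image_eqI imageE)
qed

lemma Xset_diff_act_Xset:
  assumes d: "d \<ge> 2" and v: "v \<in> Vd d"
  shows "Xset d - act v ` Xset d = (\<lambda>(n, a). coset d (std_embed d n a)) ` nonstd_ivls d (inv v)"
proof -
  have "coset d (std_embed d n a) \<in> act v ` Xset d \<longleftrightarrow> std_affine d (inv v) (std_ivl d n a)"
    if "(n, a) \<in> ivl_index d" for n a
  proof -
    have "coset d (std_embed d n a) \<in> act v ` Xset d \<longleftrightarrow> coset d (inv v \<circ> std_embed d n a) \<in> Xset d"
      using act_inv_mem_iff[OF perm01_bij[OF Vd_perm01[OF v]]] act_coset by metis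
    then show ?thesis
      using coset_std_embed_in_Xset_iff[OF d inv_in_Vd[OF d v] that] by simp
  qed
  then show ?thesis
    unfolding nonstd_ivls_def by (subst (1) Xset_eq[OF d]) auto
qed

lemma nonstd_ivls_finite:
  assumes d: "d \<ge> 2" and v: "v \<in> Vd d"
  shows "finite (nonstd_ivls d v)"
proof -
  have d0: "d > 0"
    using d by simp
  obtain L where L: "\<And>n a. L \<le> n \<Longrightarrow> std_index d n a \<Longrightarrow> \<exists>n' a'. std_index d n' a' \<and> std_map d v n a n' a'"
    using Vd_imp_locally_std[OF d v] unfolding locally_std_def eventually_sequentially by (meson zero_le)
  have "nonstd_ivls d v \<subseteq> Sigma {..<L} (\<lambda>n. {0..<int d ^ n})"
  proof clarify
    fix n a assume na: "(n, a) \<in> nonstd_ivls d v"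
    then have idx: "std_index d n a" and bad: "\<not> std_affine d v (std_ivl d n a)"
      unfolding nonstd_ivls_def ivl_index_def by auto
    have "n < L"
      using L[OF _ idx] bad std_map_std_affine[OF d0] by (meson not_less)
    then show "n \<in> {..<L} \<and> a \<in> {0..<int d ^ n}"
      using idx unfolding std_index_def by auto
  qed
  then show ?thesis
    by (rule finite_subset) auto
qed

section \<open>The cocycle\<close>

lemma cocyc_comp:
  assumes "v1 \<in> Vd d"
  shows "cocyc d (v1 \<circ> v2) = (\<lambda>C. qreg v1 (cocyc d v2) C + cocyc d v1 C)"
proof
  fix C
  have b: "bij v1"
    using perm01_bij Vd_perm01 assms by blast
  have "act (v1 \<circ> v2) ` Xset d = act v1 ` (act v2 ` Xset d)"
    by (auto simp: act_comp image_image)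
  then have "act (inv v1) C \<in> act v2 ` Xset d \<longleftrightarrow> C \<in> act (v1 \<circ> v2) ` Xset d"
    using act_inv_mem_iff[OF b] by simp
  moreover have "act (inv v1) C \<in> Xset d \<longleftrightarrow> C \<in> act v1 ` Xset d"
    using act_inv_mem_iff[OF b] .
  ultimately show "cocyc d (v1 \<circ> v2) C = qreg v1 (cocyc d v2) C + cocyc d v1 C"
    unfolding cocyc_def qreg_def indicator_def by auto
qed

definition cocyc_support :: "nat \<Rightarrow> (real \<Rightarrow> real) \<Rightarrow> (real \<Rightarrow> real) set set" where
  "cocyc_support d v = (act v ` Xset d - Xset d) \<union> (Xset d - act v ` Xset d)"

lemma cocyc_squared: "(cocyc d v C)\<^sup>2 = indicator (cocyc_support d v) C"
  unfolding cocyc_def cocyc_support_def indicator_def by auto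

lemma cocyc_support_subset_Quot:
  assumes d: "d \<ge> 2" and v: "v \<in> Vd d"
  shows "cocyc_support d v \<subseteq> Quot d"
proof -
  have "Xset d \<subseteq> Quot d" "act v ` Xset d \<subseteq> Quot d"
    unfolding Xset_def Quot_def using act_coset comp_in_Vd[OF d v] by auto
  then show ?thesis
    unfolding cocyc_support_def by blast
qed

lemma finite_card_cocyc_support:
  assumes d: "d \<ge> 2" and v: "v \<in> Vd d"
  shows "finite (cocyc_support d v)"
    "card (cocyc_support d v) = card (nonstd_ivls d v) + card (nonstd_ivls d (inv v))"
proof -
  have sub: "nonstd_ivls d w \<subseteq> ivl_index d" for w
    unfolding nonstd_ivls_def by auto
  have inj1: "inj_on (\<lambda>(n, a). coset d (v \<circ> std_embed d n a)) (nonstd_ivls d v)"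
    using inj_on_subset[OF inj_on_coset_std_embed[OF d v] sub] .
  have inj2: "inj_on (\<lambda>(n, a). coset d (std_embed d n a)) (nonstd_ivls d (inv v))"
    using inj_on_subset[OF inj_on_coset_std_embed[OF d id_in_Vd[OF d]] sub] by simp
  have fin: "finite (nonstd_ivls d v)" "finite (nonstd_ivls d (inv v))"
    using nonstd_ivls_finite[OF d] v inv_in_Vd[OF d v] by auto
  have fin_parts: "finite (act v ` Xset d - Xset d)" "finite (Xset d - act v ` Xset d)"
    unfolding act_Xset_diff_Xset[OF d v] Xset_diff_act_Xset[OF d v] using fin by blast+
  then show "finite (cocyc_support d v)"
    unfolding cocyc_support_def by blast
  have "card (cocyc_support d v) = card (act v ` Xset d - Xset d) + card (Xset d - act v ` Xset d)"
    unfolding cocyc_support_def using fin_parts by (intro card_Un_disjoint) auto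
  then show "card (cocyc_support d v) = card (nonstd_ivls d v) + card (nonstd_ivls d (inv v))"
    unfolding act_Xset_diff_Xset[OF d v] Xset_diff_act_Xset[OF d v] card_image[OF inj1] card_image[OF inj2] .
qed

lemma cocyc_l2:
  assumes d: "d \<ge> 2" and v: "v \<in> Vd d"
  shows "in_l2 d (cocyc d v)" "l2norm d (cocyc d v) = sqrt (real (card (cocyc_support d v)))"
proof -
  note fin = finite_card_cocyc_support(1)[OF d v]
  have sub: "cocyc_support d v \<subseteq> Quot d"
    using cocyc_support_subset_Quot[OF d v] .
  have outside: "(cocyc d v C)\<^sup>2 = 0" if "C \<in> Quot d - cocyc_support d v" for C
    using that unfolding cocyc_squared by simp
  have "(\<lambda>C. (cocyc d v C)\<^sup>2) summable_on cocyc_support d v"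
    using fin by simp
  moreover have "(\<lambda>C. (cocyc d v C)\<^sup>2) summable_on cocyc_support d v
      \<longleftrightarrow> (\<lambda>C. (cocyc d v C)\<^sup>2) summable_on Quot d"
    using sub outside by (intro summable_on_cong_neutral) auto
  ultimately have "(\<lambda>C. (cocyc d v C)\<^sup>2) summable_on Quot d"
    by simp
  moreover have "cocyc d v C = 0" if "C \<notin> Quot d" for C
  proof -
    have "C \<notin> cocyc_support d v"
      using that sub by blast
    then show ?thesis
      using cocyc_squared[of d v C] by simp
  qed
  ultimately show "in_l2 d (cocyc d v)"
    unfolding in_l2_def by auto
  have "infsum (\<lambda>C. (cocyc d v C)\<^sup>2) (Quot d) = infsum (\<lambda>C. (cocyc d v C)\<^sup>2) (cocyc_support d v)"
    using sub outside by (intro infsum_cong_neutral) auto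
  also have "\<dots> = real (card (cocyc_support d v))"
    using fin unfolding cocyc_squared by simp
  finally show "l2norm d (cocyc d v) = sqrt (real (card (cocyc_support d v)))"
    unfolding l2norm_def by simp
qed

section \<open>Properness\<close>

lemma std_affine_subivl:
  assumes d0: "d > 0" and "perm01 v" "std_affine d v (std_ivl d j k)"
    and "std_ivl d m a \<subseteq> std_ivl d j k" "j \<le> m" "std_index d m a"
  shows "std_affine d v (std_ivl d m a)"
proof -
  obtain n' a' where "std_map d v j k n' a'"
    using std_affine_imp_std_map[OF d0 assms(3)] by blast
  moreover obtain i where i: "m = j + i"
    using assms(5) le_Suc_ex by blast
  ultimately have map: "std_map d v m a (n' + i) (a' * int d ^ i + a - k * int d ^ i)"
    using std_map_refine[OF d0] assms(4) by simp
  moreover have "std_index d (n' + i) (a' * int d ^ i + a - k * int d ^ i)"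
    using std_map_std_index[OF d0 map assms(6) perm01_image_subset[OF assms(2)]] .
  ultimately show ?thesis
    using std_map_std_affine[OF d0] by blast
qed

text \<open>A standard interval of level \<open>m\<close> has ancestors at the \<open>m\<close> levels \<open>1, \<dots>, m\<close>, and \<open>v\<close> fails
  to be standard affine on each of them if it fails on the interval itself.\<close>

lemma std_affine_at_level:
  assumes d: "d \<ge> 2" and v: "v \<in> Vd d" and card: "card (nonstd_ivls d v) < m"
    and "std_index d m a"
  shows "std_affine d v (std_ivl d m a)"
proof (rule ccontr)
  assume bad: "\<not> std_affine d v (std_ivl d m a)"
  have d0: "d > 0"
    using d by simp
  have "\<forall>j\<in>{1..m}. \<exists>k. std_index d j k \<and> std_ivl d m a \<subseteq> std_ivl d j k"
    using std_ivl_ancestor[OF d0 assms(4)] by (metis atLeastAtMost_iff)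
  then obtain k where k: "\<And>j. j \<in> {1..m} \<Longrightarrow> std_index d j (k j) \<and> std_ivl d m a \<subseteq> std_ivl d j (k j)"
    by metis
  have "(\<lambda>j. (j, k j)) ` {1..m} \<subseteq> nonstd_ivls d v"
  proof clarify
    fix j assume j: "j \<in> {1..m}"
    then have "\<not> std_affine d v (std_ivl d j (k j))"
      using bad std_affine_subivl[OF d0 Vd_perm01[OF v] _ _ _ assms(4)] k by auto
    then show "(j, k j) \<in> nonstd_ivls d v"
      using j k unfolding nonstd_ivls_def ivl_index_def by auto
  qed
  then have "card ((\<lambda>j. (j, k j)) ` {1..m}) \<le> card (nonstd_ivls d v)"
    using nonstd_ivls_finite[OF d v] by (rule card_mono[rotated])
  moreover have "card ((\<lambda>j. (j, k j)) ` {1..m}) = m"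
    by (subst card_image) (auto simp: inj_on_def)
  ultimately show False
    using card by simp
qed

text \<open>If \<open>v\<close> maps a level-\<open>m\<close> interval onto a level-\<open>l\<close> one, and \<open>v\<^sup>-\<^sup>1\<close> is standard affine on
  the level-\<open>m\<close> ancestor of the image, then composing the two refined maps gives a standard map
  of the level-\<open>m\<close> interval onto itself of level \<open>p + l - m\<close>, so \<open>p + l = 2m\<close>.\<close>

lemma std_map_level_bound:
  assumes d: "d \<ge> 2" and v: "v \<in> Vd d" and a: "std_index d m a"
    and map: "std_map d v m a l a'" "std_index d l a'"
    and inv_std: "\<And>c. std_index d m c \<Longrightarrow> std_affine d (inv v) (std_ivl d m c)"
  shows "l \<le> 2 * m"
proof (cases "l \<le> m")
  case False
  have d0: "d > 0"
    using d by simp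
  obtain c where c: "std_index d m c" "std_ivl d l a' \<subseteq> std_ivl d m c"
    using std_ivl_ancestor[OF d0 map(2), of m] False by auto
  obtain p c' where "std_map d (inv v) m c p c'"
    using std_affine_imp_std_map[OF d0 inv_std[OF c(1)]] by blast
  moreover obtain j where j: "l = m + j"
    using False le_Suc_ex by (metis nat_le_linear)
  ultimately have "std_map d (inv v) l a' (p + j) (c' * int d ^ j + a' - c * int d ^ j)"
    using std_map_refine[OF d0] c(2) by simp
  then have "std_map d (inv v \<circ> v) m a (p + j) (c' * int d ^ j + a' - c * int d ^ j)"
    using std_map_comp[OF d0 map(1)] by blast
  moreover have "(inv v \<circ> v) x = id x" for x
    using perm01_bij[OF Vd_perm01[OF v]] by (simp add: bij_is_inj)
  ultimately have "std_map d id m a (p + j) (c' * int d ^ j + a' - c * int d ^ j)"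
    using std_map_cong[where f = "inv v \<circ> v" and g = id] by simp
  then have "std_ivl d m a = std_ivl d (p + j) (c' * int d ^ j + a' - c * int d ^ j)"
    using std_map_image[OF d0] by fastforce
  then have "m = p + j"
    using std_ivl_inj[OF d] by blast
  with j show ?thesis
    by simp
qed simp

definition tame_at_level :: "nat \<Rightarrow> nat \<Rightarrow> (real \<Rightarrow> real) set" where
  "tame_at_level d m = {v \<in> Vd d. \<forall>a. std_index d m a \<longrightarrow>
     std_affine d v (std_ivl d m a) \<and> std_affine d (inv v) (std_ivl d m a)}"

lemma tame_at_level_image:
  assumes d: "d \<ge> 2" and v: "v \<in> tame_at_level d m" and a: "std_index d m a"
  obtains l a' where "l \<le> 2 * m" "std_index d l a'" "std_map d v m a l a'"
proof -
  have d0: "d > 0"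
    using d by simp
  obtain l a' where "std_index d l a'" "std_map d v m a l a'"
    using std_affine_imp_std_map[OF d0] v a unfolding tame_at_level_def by blast
  moreover have "l \<le> 2 * m"
    using std_map_level_bound[OF d _ a calculation(2,1)] v unfolding tame_at_level_def by blast
  ultimately show ?thesis
    using that by blast
qed

lemma tame_at_level_eqI:
  assumes d: "d \<ge> 2" and v: "v \<in> tame_at_level d m" and w: "w \<in> tame_at_level d m"
    and images: "\<And>a. std_index d m a \<Longrightarrow> v ` std_ivl d m a = w ` std_ivl d m a"
  shows "v = w"
proof
  fix x
  have d0: "d > 0"
    using d by simp
  show "v x = w x"
  proof (cases "x \<in> {0..<1}")
    case False
    have "perm01 v" "perm01 w"
      using v w Vd_perm01 unfolding tame_at_level_def by auto
    with False show ?thesis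
      unfolding perm01_def by simp
  next
    case True
    define a where "a = \<lfloor>x * real d ^ m\<rfloor>"
    have x: "x \<in> std_ivl d m a" "std_index d m a"
      using floor_std_ivl[OF d0, of x m] True unfolding a_def by auto
    obtain l1 a1 where 1: "std_map d v m a l1 a1"
      using tame_at_level_image[OF d v x(2)] by metis
    obtain l2 a2 where 2: "std_map d w m a l2 a2"
      using tame_at_level_image[OF d w x(2)] by metis
    have "std_ivl d l1 a1 = std_ivl d l2 a2"
      using images[OF x(2)] std_map_image[OF d0 1] std_map_image[OF d0 2] by simp
    then have "l1 = l2" "a1 = a2"
      using std_ivl_inj[OF d] by blast+
    then show ?thesis
      using 1 2 x(1) unfolding std_map_def by simp
  qed
qed

text \<open>An element tame at level \<open>m\<close> is determined by the images of the finitely many level-\<open>m\<close>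
  intervals, each of which is one of the finitely many standard intervals of level at most \<open>2m\<close>.\<close>

lemma finite_tame_at_level:
  assumes d: "d \<ge> 2"
  shows "finite (tame_at_level d m)"
proof -
  have d0: "d > 0"
    using d by simp
  define images where "images = (\<lambda>v::real \<Rightarrow> real. restrict (\<lambda>a. v ` std_ivl d m a) {0..<int d ^ m})"
  define T where "T = (\<lambda>(n, a). std_ivl d n a) ` Sigma {..2 * m} (\<lambda>n. {0..<int d ^ n})"
  have "images v \<in> (\<Pi>\<^sub>E a \<in> {0..<int d ^ m}. T)" if v: "v \<in> tame_at_level d m" for v
  proof (rule PiE_I)
    fix a assume a: "a \<in> {0..<int d ^ m}"
    then have "std_index d m a"
      unfolding std_index_def by simp
    then obtain l a' where l: "l \<le> 2 * m" "std_index d l a'" "std_map d v m a l a'"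
      by (rule tame_at_level_image[OF d v])
    then have "images v a = std_ivl d l a'"
      using a std_map_image[OF d0 l(3)] unfolding images_def by simp
    moreover have "(l, a') \<in> Sigma {..2 * m} (\<lambda>n. {0..<int d ^ n})"
      using l unfolding std_index_def by simp
    ultimately show "images v a \<in> T"
      unfolding T_def by force
  next
    fix a assume "a \<notin> {0..<int d ^ m}"
    then show "images v a = undefined"
      unfolding images_def by auto
  qed
  then have "images ` tame_at_level d m \<subseteq> (\<Pi>\<^sub>E a \<in> {0..<int d ^ m}. T)"
    by blast
  moreover have "inj_on images (tame_at_level d m)"
  proof (rule inj_onI)
    fix v w assume v: "v \<in> tame_at_level d m" and w: "w \<in> tame_at_level d m" and eq: "images v = images w"
    have "v ` std_ivl d m a = w ` std_ivl d m a" if "std_index d m a" for a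
      using fun_cong[OF eq, of a] that unfolding images_def std_index_def by simp
    then show "v = w"
      by (rule tame_at_level_eqI[OF d v w])
  qed
  moreover have "finite (\<Pi>\<^sub>E a \<in> {0..<int d ^ m}. T)"
    unfolding T_def by (intro finite_PiE) auto
  ultimately show ?thesis
    using inj_on_finite by blast
qed

lemma finite_cocyc_norm_le:
  assumes d: "d \<ge> 2"
  shows "finite {v \<in> Vd d. l2norm d (cocyc d v) \<le> r}"
proof -
  define m where "m = nat \<lceil>r\<^sup>2\<rceil> + 1"
  have "{v \<in> Vd d. l2norm d (cocyc d v) \<le> r} \<subseteq> tame_at_level d m"
  proof clarify
    fix v assume v: "v \<in> Vd d" and r: "l2norm d (cocyc d v) \<le> r"
    have "real (card (cocyc_support d v)) \<le> r\<^sup>2"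
      using r unfolding cocyc_l2(2)[OF d v] by (metis of_nat_0_le_iff real_sqrt_le_iff sqrt_le_D)
    also have "\<dots> < real m"
      unfolding m_def by linarith
    finally have "card (nonstd_ivls d v) < m" "card (nonstd_ivls d (inv v)) < m"
      unfolding finite_card_cocyc_support(2)[OF d v] by linarith+
    then show "v \<in> tame_at_level d m"
      unfolding tame_at_level_def using std_affine_at_level[OF d] v inv_in_Vd[OF d v] by blast
  qed
  then show ?thesis
    using finite_tame_at_level[OF d] finite_subset by blast
qed

theorem theorem5p5:
  fixes d :: nat
  assumes "d \<ge> 2"
  shows "(\<forall>v \<in> Vd d. in_l2 d (cocyc d v))
    \<and> (\<forall>v1 \<in> Vd d. \<forall>v2 \<in> Vd d.
          cocyc d (v1 \<circ> v2) = (\<lambda>C. qreg v1 (cocyc d v2) C + cocyc d v1 C))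
    \<and> (\<forall>r::real. finite {v \<in> Vd d. l2norm d (cocyc d v) \<le> r})
    \<and> (\<forall>r::real. finite {v \<in> Td d. l2norm d (cocyc d v) \<le> r})
    \<and> (\<forall>r::real. finite {v \<in> Fd d. l2norm d (cocyc d v) \<le> r})"
proof (intro conjI allI ballI)
  fix r :: real
  show "finite {v \<in> Vd d. l2norm d (cocyc d v) \<le> r}"
    using finite_cocyc_norm_le[OF assms] .
  show "finite {v \<in> Td d. l2norm d (cocyc d v) \<le> r}"
    by (rule finite_subset[OF _ finite_cocyc_norm_le[OF assms]]) (auto simp: Td_def)
  show "finite {v \<in> Fd d. l2norm d (cocyc d v) \<le> r}"
    by (rule finite_subset[OF _ finite_cocyc_norm_le[OF assms]]) (auto simp: Fd_def)
qed (simp_all add: cocyc_l2(1)[OF assms] cocyc_comp)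

end
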